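(* Let $\mathcal{A}$ be a finite list of elements of a finitely generated abelian group $\Gamma$ and let $G$ be a finite abelian group. Then $\#\mathcal{M}(\mathcal{A};\Gamma,G)=\chi^G_{\mathcal{A}}(\#G)$.
   Context: $\mathcal{M}(\mathcal{A};\Gamma,G)=\mathrm{Hom}(\Gamma,G)\smallsetminus\bigcup_{\alpha\in\mathcal{A}}\{\varphi\mid\varphi(\alpha)=0\}$. $r_\Gamma$ is the rank of $\Gamma$, $r_{\mathcal{S}}$ the rank of $\langle\mathcal{S}\rangle$, $m(\mathcal{S};G)=\#\mathrm{Hom}((\Gamma/\langle\mathcal{S}\rangle)_{\mathrm{tor}},G)$ and $\chi^G_{\mathcal{A}}(t)=\sum_{\mathcal{S}\subset\mathcal{A}}(-1)^{\#\mathcal{S}}m(\mathcal{S};G)t^{r_\Gamma-r_{\mathcal{S}}}$ (sublists distinguished by index). *)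

theory Defs
  imports "HOL-Algebra.Algebra" "HOL-Computational_Algebra.Polynomial"
begin

text \<open>Abelian groups are written multiplicatively (HOL-Algebra); the paper's
  0 of G is the unit of G.\<close>

definition fin_gen :: "('a, 'b) monoid_scheme \<Rightarrow> bool" where
  "fin_gen \<Gamma> \<longleftrightarrow> (\<exists>S. finite S \<and> S \<subseteq> carrier \<Gamma> \<and> generate \<Gamma> S = carrier \<Gamma>)"

definition int_indep :: "('a, 'b) monoid_scheme \<Rightarrow> nat \<Rightarrow> (nat \<Rightarrow> 'a) \<Rightarrow> bool" where
  "int_indep \<Gamma> k f \<longleftrightarrow>
     (\<forall>c :: nat \<Rightarrow> int. finprod \<Gamma> (\<lambda>i. f i [^]\<^bsub>\<Gamma>\<^esub> c i) {..<k} = \<one>\<^bsub>\<Gamma>\<^esub> \<longrightarrow> (\<forall>i<k. c i = 0))"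

definition grp_rank :: "('a, 'b) monoid_scheme \<Rightarrow> 'a set \<Rightarrow> nat" where
  "grp_rank \<Gamma> H = Max {k. \<exists>f. (\<forall>i<k. f i \<in> H) \<and> int_indep \<Gamma> k f}"

definition torsion_subgroup :: "('a, 'b) monoid_scheme \<Rightarrow> 'a set" where
  "torsion_subgroup \<Gamma> = {x \<in> carrier \<Gamma>. \<exists>n::nat. n > 0 \<and> x [^]\<^bsub>\<Gamma>\<^esub> n = \<one>\<^bsub>\<Gamma>\<^esub>}"

definition Hom :: "('a, 'b) monoid_scheme \<Rightarrow> ('c, 'd) monoid_scheme \<Rightarrow> ('a \<Rightarrow> 'c) set" where
  "Hom A B = hom A B \<inter> extensional (carrier A)"

definition M_set :: "'a list \<Rightarrow> ('a, 'b) monoid_scheme \<Rightarrow> ('c, 'd) monoid_scheme \<Rightarrow> ('a \<Rightarrow> 'c) set" where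
  "M_set \<A> \<Gamma> G = {\<phi> \<in> Hom \<Gamma> G. \<forall>\<alpha> \<in> set \<A>. \<phi> \<alpha> \<noteq> \<one>\<^bsub>G\<^esub>}"

text \<open>Sublists are given by index sets I \<subseteq> {..<length A}.\<close>
definition sub_span :: "'a list \<Rightarrow> ('a, 'b) monoid_scheme \<Rightarrow> nat set \<Rightarrow> 'a set" where
  "sub_span \<A> \<Gamma> I = generate \<Gamma> ((\<lambda>i. \<A> ! i) ` I)"

definition m_count :: "'a list \<Rightarrow> ('a, 'b) monoid_scheme \<Rightarrow> ('c, 'd) monoid_scheme \<Rightarrow> nat set \<Rightarrow> nat" where
  "m_count \<A> \<Gamma> G I =
     (let Q = \<Gamma> Mod (sub_span \<A> \<Gamma> I)
      in card (Hom (Q\<lparr>carrier := torsion_subgroup Q\<rparr>) G))"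

definition char_poly :: "'a list \<Rightarrow> ('a, 'b) monoid_scheme \<Rightarrow> ('c, 'd) monoid_scheme \<Rightarrow> int poly" where
  "char_poly \<A> \<Gamma> G =
     (\<Sum>I \<in> Pow {..<length \<A>}.
        monom ((-1) ^ card I * int (m_count \<A> \<Gamma> G I))
              (grp_rank \<Gamma> (carrier \<Gamma>) - grp_rank \<Gamma> (sub_span \<A> \<Gamma> I)))"

end

theory Submission
  imports Defs
begin

text \<open>By inclusion--exclusion over the positions of \<open>\<A>\<close>, \<open>#\<M>\<close> is the alternating sum, over
  sublists \<open>S\<close>, of the number of homomorphisms \<open>\<Gamma> \<rightarrow> G\<close> killing \<open>\<langle>S\<rangle>\<close>, i.e. of
  \<open>#Hom(\<Gamma>/\<langle>S\<rangle>, G)\<close>. A finitely generated abelian group \<open>Q\<close> is the product of its torsion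
  subgroup and a free subgroup of rank \<open>rk Q\<close>, so \<open>#Hom(Q, G) = #Hom(Q\<^sub>t\<^sub>o\<^sub>r, G) \<cdot> #G\<^bsup>rk Q\<^esup>\<close>,
  and \<open>rk(\<Gamma>/\<langle>S\<rangle>) = rk \<Gamma> - rk \<langle>S\<rangle>\<close>. The free complement is obtained from a maximal
  independent family \<open>e\<close> and an exponent \<open>N \<noteq> 0\<close> with \<open>x\<^sup>N \<in> \<langle>e\<rangle>\<close> for all \<open>x\<close>, by lifting a
  basis of the lattice of coordinates of the \<open>x\<^sup>N\<close>.\<close>

definition lin_comb :: "('a, 'b) monoid_scheme \<Rightarrow> ('i \<Rightarrow> 'a) \<Rightarrow> ('i \<Rightarrow> int) \<Rightarrow> 'i set \<Rightarrow> 'a" where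
  "lin_comb G x c I = finprod G (\<lambda>i. x i [^]\<^bsub>G\<^esub> c i) I"

definition lin_indep :: "('a, 'b) monoid_scheme \<Rightarrow> ('i \<Rightarrow> 'a) \<Rightarrow> 'i set \<Rightarrow> bool" where
  "lin_indep G x I \<longleftrightarrow> (\<forall>c. lin_comb G x c I = \<one>\<^bsub>G\<^esub> \<longrightarrow> (\<forall>i\<in>I. c i = 0))"

definition lin_spans :: "('a, 'b) monoid_scheme \<Rightarrow> ('i \<Rightarrow> 'a) \<Rightarrow> 'i set \<Rightarrow> bool" where
  "lin_spans G x I \<longleftrightarrow> finite I \<and> x ` I \<subseteq> carrier G \<and> (\<forall>y\<in>carrier G. \<exists>c. y = lin_comb G x c I)"

lemma int_indep_iff_lin_indep: "int_indep G k f \<longleftrightarrow> lin_indep G f {..<k}"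
  unfolding int_indep_def lin_indep_def lin_comb_def by auto

context comm_group
begin

lemma lin_comb_closed [intro, simp]: "x ` I \<subseteq> carrier G \<Longrightarrow> lin_comb G x c I \<in> carrier G"
  unfolding lin_comb_def by (intro finprod_closed) auto

lemma lin_comb_empty [simp]: "lin_comb G x c {} = \<one>"
  unfolding lin_comb_def by simp

lemma lin_comb_insert:
  assumes "finite I" "i \<notin> I" "x ` insert i I \<subseteq> carrier G"
  shows "lin_comb G x c (insert i I) = x i [^] c i \<otimes> lin_comb G x c I"
  unfolding lin_comb_def using assms by (subst finprod_insert) auto

lemma lin_comb_cong:
  assumes "\<And>i. i \<in> I \<Longrightarrow> x i [^] c i = y i [^] d i" "y ` I \<subseteq> carrier G"
  shows "lin_comb G x c I = lin_comb G y d I"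
  unfolding lin_comb_def using assms by (intro finprod_cong') auto

lemma lin_comb_coeff_cong:
  assumes "\<And>i. i \<in> I \<Longrightarrow> c i = d i" "x ` I \<subseteq> carrier G"
  shows "lin_comb G x c I = lin_comb G x d I"
  using assms by (intro lin_comb_cong) auto

lemma lin_comb_zero [simp]: "lin_comb G x (\<lambda>_. 0) I = \<one>"
  unfolding lin_comb_def by simp

lemma lin_comb_add:
  assumes "x ` I \<subseteq> carrier G"
  shows "lin_comb G x (\<lambda>i. c i + d i) I = lin_comb G x c I \<otimes> lin_comb G x d I"
  unfolding lin_comb_def using assms
  by (subst finprod_multf[symmetric]) (auto intro!: finprod_cong' int_pow_mult)

lemma lin_comb_int_pow:
  assumes "x ` I \<subseteq> carrier G"
  shows "lin_comb G x c I [^] (k::int) = lin_comb G x (\<lambda>i. k * c i) I"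
proof (cases "finite I")
  case True
  then show ?thesis using assms
  proof (induction I rule: finite_induct)
    case (insert i I)
    then have "x i \<in> carrier G" by auto
    with insert show ?case
      by (simp add: lin_comb_insert int_pow_distrib int_pow_pow mult.commute)
  qed simp
qed (simp add: lin_comb_def)

lemma lin_comb_neg:
  assumes "x ` I \<subseteq> carrier G"
  shows "lin_comb G x (\<lambda>i. - c i) I = inv (lin_comb G x c I)"
  using lin_comb_int_pow[OF assms, of c "-1"] assms by (simp add: int_pow_neg)

lemma lin_comb_diff:
  assumes "x ` I \<subseteq> carrier G"
  shows "lin_comb G x (\<lambda>i. c i - d i) I = lin_comb G x c I \<otimes> inv (lin_comb G x d I)"
  using lin_comb_add[OF assms, of c "\<lambda>i. - d i"] lin_comb_neg[OF assms, of d] by simp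

lemma lin_comb_indicator:
  assumes "finite I" "a \<in> I" "x ` I \<subseteq> carrier G"
  shows "lin_comb G x (\<lambda>i. if i = a then 1 else 0) I = x a"
proof -
  have I: "I = insert a (I - {a})" using assms by auto
  have "lin_comb G x (\<lambda>i. if i = a then 1 else 0) (I - {a}) = lin_comb G x (\<lambda>_. 0) (I - {a})"
    using assms by (intro lin_comb_coeff_cong) auto
  then show ?thesis
    using assms by (subst I, subst lin_comb_insert) auto
qed

lemma lin_comb_lin_comb:
  assumes "finite I" "x ` I \<subseteq> carrier G" "w ` J \<subseteq> carrier G"
    and "\<And>i. i \<in> I \<Longrightarrow> x i = lin_comb G w (C i) J"
  shows "lin_comb G x d I = lin_comb G w (\<lambda>j. \<Sum>i\<in>I. d i * C i j) J"
  using assms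
proof (induction I rule: finite_induct)
  case (insert i I)
  then have "lin_comb G x d (insert i I)
      = lin_comb G w (\<lambda>j. d i * C i j) J \<otimes> lin_comb G w (\<lambda>j. \<Sum>i\<in>I. d i * C i j) J"
    by (simp add: lin_comb_insert lin_comb_int_pow)
  with insert show ?case by (simp add: lin_comb_add)
qed simp

lemma lin_comb_hom:
  assumes "comm_group H" "h \<in> hom G H" "x ` I \<subseteq> carrier G"
  shows "h (lin_comb G x c I) = lin_comb H (\<lambda>i. h (x i)) c I"
proof -
  interpret H: comm_group H by fact
  interpret group_hom G H h
    using assms by (simp add: group_hom_def group_hom_axioms_def is_group)
  show ?thesis
  proof (cases "finite I")
    case True
    then show ?thesis using assms(3)
    proof (induction I rule: finite_induct)
      case (insert i I)
      then have "(\<lambda>i. h (x i)) ` insert i I \<subseteq> carrier H" by auto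
      with insert show ?case by (simp add: lin_comb_insert H.lin_comb_insert hom_int_pow)
    qed simp
  qed (simp add: lin_comb_def)
qed

lemma lin_comb_in_subgroup:
  assumes "subgroup H G" "x ` I \<subseteq> H"
  shows "lin_comb G x c I \<in> H"
proof -
  interpret H: subgroup H G by fact
  show ?thesis
  proof (cases "finite I")
    case True
    then show ?thesis using assms(2)
    proof (induction I rule: finite_induct)
      case (insert i I)
      then have "lin_comb G x c (insert i I) = x i [^] c i \<otimes> lin_comb G x c I"
        by (intro lin_comb_insert) auto
      with insert show ?case by (simp add: subgroup_int_pow_closed[OF assms(1)])
    qed simp
  qed (simp add: lin_comb_def)
qed

lemma lin_comb_append:
  fixes a q :: nat
  assumes "f ` {..<a} \<subseteq> carrier G" "y ` {..<q} \<subseteq> carrier G"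
  shows "lin_comb G (\<lambda>i. if i < a then f i else y (i - a)) c {..<a + q}
    = lin_comb G f c {..<a} \<otimes> lin_comb G y (\<lambda>j. c (a + j)) {..<q}"
  using assms(2)
proof (induction q)
  case 0
  have "lin_comb G (\<lambda>i. if i < a then f i else y (i - a)) c {..<a} = lin_comb G f c {..<a}"
    using assms(1) by (intro lin_comb_cong) auto
  with assms(1) show ?case by simp
next
  case (Suc q)
  let ?z = "\<lambda>i. if i < a then f i else y (i - a)"
  have yq: "y q \<in> carrier G" and y: "y ` {..<q} \<subseteq> carrier G" using Suc.prems by auto
  have z: "?z ` {..<a + Suc q} \<subseteq> carrier G" using assms(1) Suc.prems by (auto simp: image_subset_iff)
  have "lin_comb G ?z c {..<a + Suc q} = y q [^] c (a + q) \<otimes> lin_comb G ?z c {..<a + q}"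
    using z by (simp add: lessThan_Suc lin_comb_insert)
  also have "\<dots> = lin_comb G f c {..<a} \<otimes> (y q [^] c (a + q) \<otimes> lin_comb G y (\<lambda>j. c (a + j)) {..<q})"
    using Suc.IH[OF y] assms(1) yq y by (simp add: m_lcomm)
  also have "\<dots> = lin_comb G f c {..<a} \<otimes> lin_comb G y (\<lambda>j. c (a + j)) {..<Suc q}"
    using Suc.prems by (simp add: lessThan_Suc lin_comb_insert)
  finally show ?case .
qed

end

text \<open>Gaussian elimination step: pivoting on the entry \<open>C i\<^sub>0 p \<noteq> 0\<close> turns a relation \<open>d'\<close>
  among the rows of the reduced matrix \<open>C i\<^sub>0 p * C i j - C i p * C i\<^sub>0 j\<close> (\<open>i \<noteq> i\<^sub>0\<close>)
  into a relation \<open>d\<close> among the rows of \<open>C\<close> that also kills column \<open>p\<close>.\<close>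

lemma int_relation_pivot:
  fixes C :: "'i \<Rightarrow> 'j \<Rightarrow> int" and d' :: "'i \<Rightarrow> int" and p :: 'j
  assumes "finite I" "i0 \<in> I"
  defines "d \<equiv> \<lambda>i. if i = i0 then - (\<Sum>k\<in>I - {i0}. d' k * C k p) else C i0 p * d' i"
  shows "(\<Sum>i\<in>I. d i * C i j) = (\<Sum>i\<in>I - {i0}. d' i * (C i0 p * C i j - C i p * C i0 j))"
proof -
  have "(\<Sum>i\<in>I. d i * C i j) = d i0 * C i0 j + (\<Sum>i\<in>I - {i0}. d i * C i j)"
    using assms by (simp add: sum.remove)
  also have "(\<Sum>i\<in>I - {i0}. d i * C i j) = (\<Sum>i\<in>I - {i0}. C i0 p * d' i * C i j)"
    by (intro sum.cong) (auto simp: d_def)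
  also have "d i0 * C i0 j = - (\<Sum>i\<in>I - {i0}. d' i * C i p * C i0 j)"
    by (simp add: d_def sum_distrib_right)
  finally show ?thesis
    by (simp add: sum_subtractf[symmetric] algebra_simps)
qed

lemma int_relation_exists:
  fixes C :: "'i \<Rightarrow> 'j \<Rightarrow> int"
  assumes "finite J" "finite I" "card J < card I"
  shows "\<exists>d. (\<exists>i\<in>I. d i \<noteq> 0) \<and> (\<forall>j\<in>J. (\<Sum>i\<in>I. d i * C i j) = 0)"
  using assms
proof (induction J arbitrary: I C rule: finite_induct)
  case empty
  then show ?case by (intro exI[of _ "\<lambda>_. 1"]) (auto simp: card_gt_0_iff)
next
  case (insert p J)
  show ?case
  proof (cases "\<forall>i\<in>I. C i p = 0")
    case True
    from insert have "card J < card I" by simp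
    from insert.IH[OF insert.prems(1) this, of C] obtain d
      where "\<exists>i\<in>I. d i \<noteq> 0" "\<forall>j\<in>J. (\<Sum>i\<in>I. d i * C i j) = 0" by blast
    with True show ?thesis by (intro exI[of _ d]) auto
  next
    case False
    then obtain i0 where i0: "i0 \<in> I" "C i0 p \<noteq> 0" by auto
    have "card J < card (I - {i0})" using insert i0 by simp
    from insert.IH[OF _ this, of "\<lambda>i j. C i0 p * C i j - C i p * C i0 j"] insert.prems
    obtain d' where d': "\<exists>i\<in>I - {i0}. d' i \<noteq> 0"
      "\<forall>j\<in>J. (\<Sum>i\<in>I - {i0}. d' i * (C i0 p * C i j - C i p * C i0 j)) = 0"
      by auto
    define d where "d i = (if i = i0 then - (\<Sum>k\<in>I - {i0}. d' k * C k p) else C i0 p * d' i)" for i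
    have "(\<Sum>i\<in>I. d i * C i j) = (\<Sum>i\<in>I - {i0}. d' i * (C i0 p * C i j - C i p * C i0 j))" for j
      unfolding d_def using insert.prems i0 by (intro int_relation_pivot)
    with d' i0 show ?thesis
      by (intro exI[of _ d]) (auto simp: d_def)
  qed
qed

context comm_group
begin

lemma lin_indep_card_le:
  assumes "finite I" "finite J" "x ` I \<subseteq> carrier G" "w ` J \<subseteq> carrier G"
    and "lin_indep G x I" and "\<And>i. i \<in> I \<Longrightarrow> \<exists>c. x i = lin_comb G w c J"
  shows "card I \<le> card J"
proof (rule ccontr)
  assume "\<not> ?thesis"
  then have "card J < card I" by simp
  obtain C where C: "\<And>i. i \<in> I \<Longrightarrow> x i = lin_comb G w (C i) J"
    using assms(6) by metis
  obtain d where d: "\<exists>i\<in>I. d i \<noteq> 0" "\<forall>j\<in>J. (\<Sum>i\<in>I. d i * C i j) = 0"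
    using int_relation_exists[OF assms(2,1) \<open>card J < card I\<close>] by blast
  have "lin_comb G x d I = lin_comb G w (\<lambda>j. \<Sum>i\<in>I. d i * C i j) J"
    using assms C by (intro lin_comb_lin_comb) auto
  also have "\<dots> = \<one>"
    using d(2) assms by (simp add: lin_comb_coeff_cong[of J _ "\<lambda>_. 0"])
  finally show False
    using assms(5) d(1) unfolding lin_indep_def by blast
qed

lemma lin_indep_int_pow:
  assumes "x ` I \<subseteq> carrier G" "lin_indep G x I" "\<And>i. i \<in> I \<Longrightarrow> n i \<noteq> 0"
  shows "lin_indep G (\<lambda>i. x i [^] (n i :: int)) I"
  unfolding lin_indep_def
proof (intro allI impI ballI)
  fix c i assume c: "lin_comb G (\<lambda>i. x i [^] n i) c I = \<one>" and i: "i \<in> I"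
  have "lin_comb G (\<lambda>i. x i [^] n i) c I = lin_comb G x (\<lambda>i. n i * c i) I"
    using assms by (intro lin_comb_cong) (auto simp: int_pow_pow)
  with c assms(2) i have "n i * c i = 0" unfolding lin_indep_def by metis
  with assms(3)[OF i] show "c i = 0" by simp
qed

lemma lin_indep_card_le_power_span:
  assumes "finite I" "finite J" "x ` I \<subseteq> carrier G" "w ` J \<subseteq> carrier G" "lin_indep G x I"
    and "\<And>i. i \<in> I \<Longrightarrow> \<exists>n c. n \<noteq> 0 \<and> x i [^] (n::int) = lin_comb G w c J"
  shows "card I \<le> card J"
proof -
  have "\<forall>i\<in>I. \<exists>n. n \<noteq> 0 \<and> (\<exists>c. x i [^] (n::int) = lin_comb G w c J)"
    using assms(6) by blast
  then have "\<exists>n. \<forall>i\<in>I. n i \<noteq> 0 \<and> (\<exists>c. x i [^] (n i :: int) = lin_comb G w c J)"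
    by (rule bchoice)
  then obtain n where n: "\<forall>i\<in>I. n i \<noteq> 0 \<and> (\<exists>c. x i [^] (n i :: int) = lin_comb G w c J)"
    by blast
  show ?thesis
    using assms n by (intro lin_indep_card_le[where x = "\<lambda>i. x i [^] n i"]) (auto intro!: lin_indep_int_pow)
qed

lemma lin_indep_reindex:
  assumes "bij_betw h A B" "x ` B \<subseteq> carrier G" "lin_indep G x B"
  shows "lin_indep G (x \<circ> h) A"
  unfolding lin_indep_def
proof (intro allI impI ballI)
  fix c a assume c: "lin_comb G (x \<circ> h) c A = \<one>" and a: "a \<in> A"
  define c' where "c' = c \<circ> inv_into A h"
  have "lin_comb G x c' B = finprod G (\<lambda>i. x (h i) [^] c' (h i)) A"
    unfolding lin_comb_def using assms(1,2)
    by (auto simp: bij_betw_def intro!: finprod_reindex)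
  also have "\<dots> = lin_comb G (x \<circ> h) c A"
    unfolding lin_comb_def c'_def using assms(1,2)
    by (intro finprod_cong') (auto simp: bij_betw_def)
  finally have "lin_comb G x c' B = \<one>" using c by simp
  with assms(3) have "\<forall>i\<in>B. c' i = 0" unfolding lin_indep_def by blast
  then show "c a = 0" using a assms(1) by (force simp: c'_def bij_betw_def)
qed

lemma int_indep_le_card_span:
  assumes "lin_spans G w J" "\<forall>i<m. f i \<in> carrier G" "int_indep G m f"
  shows "m \<le> card J"
  using lin_indep_card_le[of "{..<m}" J f w] assms
  unfolding lin_spans_def int_indep_iff_lin_indep by auto

lemma finite_int_indep_lengths:
  assumes "lin_spans G w J" "S \<subseteq> carrier G"
  shows "finite {k. \<exists>f. (\<forall>i<k. f i \<in> S) \<and> int_indep G k f}"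
  using int_indep_le_card_span[OF assms(1)] assms(2)
  by (intro finite_nat_set_iff_bounded_le[THEN iffD2]) blast

lemma grp_rank_witness:
  assumes "lin_spans G w J" "S \<subseteq> carrier G"
  obtains f where "\<forall>i<grp_rank G S. f i \<in> S" "int_indep G (grp_rank G S) f"
proof -
  have "0 \<in> {k. \<exists>f. (\<forall>i<k. f i \<in> S) \<and> int_indep G k f}"
    by (auto simp: int_indep_def)
  then have "grp_rank G S \<in> {k. \<exists>f. (\<forall>i<k. f i \<in> S) \<and> int_indep G k f}"
    unfolding grp_rank_def using finite_int_indep_lengths[OF assms] by (intro Max_in) auto
  with that show ?thesis by blast
qed

lemma card_le_grp_rank:
  assumes "lin_spans G w J" "S \<subseteq> carrier G" "finite I" "x ` I \<subseteq> S" "lin_indep G x I"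
  shows "card I \<le> grp_rank G S"
proof -
  obtain h where h: "bij_betw h {..<card I} I"
    using ex_bij_betw_nat_finite[OF assms(3)] by (auto simp: atLeast0LessThan)
  have "lin_indep G (x \<circ> h) {..<card I}"
    using assms(2,4,5) by (intro lin_indep_reindex[OF h]) auto
  moreover have "\<forall>i<card I. (x \<circ> h) i \<in> S"
    using h assms(4) by (auto simp: bij_betw_apply)
  ultimately have "card I \<in> {k. \<exists>f. (\<forall>i<k. f i \<in> S) \<and> int_indep G k f}"
    by (intro CollectI exI[of _ "x \<circ> h"]) (simp add: int_indep_iff_lin_indep)
  then show ?thesis
    unfolding grp_rank_def using finite_int_indep_lengths[OF assms(1,2)] by (rule Max_ge[rotated])
qed

text \<open>A maximal independent family spans up to torsion: appending any \<open>x\<close> creates a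
  relation, and in it \<open>x\<close> must occur with a nonzero coefficient.\<close>

lemma grp_rank_maximal:
  assumes "lin_spans G w J" "S \<subseteq> carrier G"
    and f: "\<forall>i<grp_rank G S. f i \<in> S" "int_indep G (grp_rank G S) f" and x: "x \<in> S"
  shows "\<exists>m c. m \<noteq> 0 \<and> x [^] (m::int) = lin_comb G f c {..<grp_rank G S}"
proof -
  define r where "r = grp_rank G S"
  have fc: "f ` {..<r} \<subseteq> carrier G" using f assms(2) by (auto simp: r_def)
  have ind: "lin_indep G f {..<r}" using f by (simp add: int_indep_iff_lin_indep r_def)
  have "\<not> lin_indep G (f(r := x)) {..<Suc r}"
  proof
    assume "lin_indep G (f(r := x)) {..<Suc r}"
    then have "card {..<Suc r} \<le> r"
      using f x assms(2) unfolding r_def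
      by (intro card_le_grp_rank[OF assms(1,2)]) (auto simp: less_Suc_eq)
    then show False by simp
  qed
  then obtain c where c: "lin_comb G (f(r := x)) c {..<Suc r} = \<one>" "\<exists>i<Suc r. c i \<noteq> 0"
    unfolding lin_indep_def by blast
  have "\<one> = lin_comb G (f(r := x)) c {..<Suc r}"
    using c(1) by (rule sym)
  also have "\<dots> = x [^] c r \<otimes> lin_comb G (f(r := x)) c {..<r}"
    using fc x assms(2) unfolding lessThan_Suc by (subst lin_comb_insert) auto
  also have "lin_comb G (f(r := x)) c {..<r} = lin_comb G f c {..<r}"
    using fc by (intro lin_comb_cong) auto
  finally have eq: "x [^] c r \<otimes> lin_comb G f c {..<r} = \<one>"
    by (rule sym)
  have "c r \<noteq> 0"
  proof
    assume "c r = 0"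
    with eq fc have "lin_comb G f c {..<r} = \<one>" by simp
    with ind have "\<forall>i<r. c i = 0" unfolding lin_indep_def by blast
    with c(2) \<open>c r = 0\<close> show False using less_Suc_eq by blast
  qed
  moreover have "x [^] c r = lin_comb G f (\<lambda>i. - c i) {..<r}"
    using eq fc x assms(2) by (simp add: lin_comb_neg inv_equality[symmetric] subsetD)
  ultimately show ?thesis unfolding r_def by blast
qed

lemma grp_rank_le_card:
  assumes "lin_spans G w J" "S \<subseteq> carrier G" "finite I" "x ` I \<subseteq> carrier G"
    and "\<And>y. y \<in> S \<Longrightarrow> \<exists>n c. n \<noteq> 0 \<and> y [^] (n::int) = lin_comb G x c I"
  shows "grp_rank G S \<le> card I"
proof -
  obtain f where f: "\<forall>i<grp_rank G S. f i \<in> S" "int_indep G (grp_rank G S) f"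
    using grp_rank_witness[OF assms(1,2)] .
  have "card {..<grp_rank G S} \<le> card I"
    using f assms by (intro lin_indep_card_le_power_span[where x = f and w = x])
      (auto simp: int_indep_iff_lin_indep)
  then show ?thesis by simp
qed

lemma generate_lin_comb:
  assumes "S \<subseteq> carrier G" "finite S" "x \<in> generate G S"
  shows "\<exists>c. x = lin_comb G id c S"
  using assms(3)
proof (induction rule: generate.induct)
  case one
  then show ?case by (intro exI[of _ "\<lambda>_. 0"]) simp
next
  case (incl h)
  show ?case
    by (intro exI[of _ "\<lambda>i. if i = h then 1 else 0"]) (use incl assms lin_comb_indicator[of S h id] in \<open>auto simp: id_def\<close>)
next
  case (inv h)
  then have "inv h = lin_comb G id (\<lambda>i. - (if i = h then 1 else 0)) S"
    using assms lin_comb_indicator[of S h id] by (simp add: lin_comb_neg)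
  then show ?case by blast
next
  case (eng h1 h2)
  then obtain c1 c2 where "h1 = lin_comb G id c1 S" "h2 = lin_comb G id c2 S" by blast
  then have "h1 \<otimes> h2 = lin_comb G id (\<lambda>i. c1 i + c2 i) S" using assms by (simp add: lin_comb_add)
  then show ?case by blast
qed

lemma fin_gen_imp_lin_spans:
  assumes "fin_gen G"
  obtains J where "lin_spans G id J"
proof -
  from assms obtain S where S: "finite S" "S \<subseteq> carrier G" "generate G S = carrier G"
    unfolding fin_gen_def by blast
  then have "lin_spans G id S"
    using generate_lin_comb[OF S(2,1)] unfolding lin_spans_def by auto
  with that show ?thesis .
qed

end

definition int_lattice :: "nat \<Rightarrow> (nat \<Rightarrow> int) set \<Rightarrow> bool" where
  "int_lattice r H \<longleftrightarrow> (\<lambda>_. 0) \<in> H \<and> (\<forall>u\<in>H. \<forall>v\<in>H. (\<lambda>j. u j + v j) \<in> H)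
     \<and> (\<forall>v\<in>H. (\<lambda>j. - v j) \<in> H) \<and> (\<forall>v\<in>H. \<forall>j\<ge>r. v j = 0)"

lemma int_lattice_add: "int_lattice r H \<Longrightarrow> u \<in> H \<Longrightarrow> v \<in> H \<Longrightarrow> (\<lambda>j. u j + v j) \<in> H"
  and int_lattice_uminus: "int_lattice r H \<Longrightarrow> v \<in> H \<Longrightarrow> (\<lambda>j. - v j) \<in> H"
  unfolding int_lattice_def by blast+

lemma int_lattice_smult:
  assumes "int_lattice r H" "v \<in> H"
  shows "(\<lambda>j. k * v j) \<in> H"
proof -
  have nat: "(\<lambda>j. int n * v j) \<in> H" for n
  proof (induction n)
    case (Suc n)
    from int_lattice_add[OF assms(1) Suc assms(2)] show ?case by (simp add: algebra_simps)
  qed (use assms in \<open>simp add: int_lattice_def\<close>)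
  show ?thesis
  proof (cases "k \<ge> 0")
    case True
    then show ?thesis using nat[of "nat k"] by simp
  next
    case False
    with int_lattice_uminus[OF assms(1) nat[of "nat (- k)"]] show ?thesis by simp
  qed
qed

text \<open>The \<open>p\<close>-th coordinates of a lattice form a subgroup of \<open>\<int>\<close>; its least positive
  element, realised by some \<open>h\<close>, divides all the others.\<close>

lemma int_lattice_pivot:
  assumes H: "int_lattice r H" and v: "v \<in> H" "v p \<noteq> 0"
  obtains h where "h \<in> H" "h p > 0" "\<And>u. u \<in> H \<Longrightarrow> h p dvd u p"
proof -
  define S where "S = {n::nat. n > 0 \<and> (\<exists>u\<in>H. u p = int n)}"
  have "nat \<bar>v p\<bar> \<in> S"
  proof (cases "v p > 0")
    case True
    with v show ?thesis by (auto simp: S_def)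
  next
    case False
    with v int_lattice_uminus[OF H v(1)] show ?thesis
      unfolding S_def by (intro CollectI conjI bexI[of _ "\<lambda>j. - v j"]) auto
  qed
  define d where "d = (LEAST n. n \<in> S)"
  have "d \<in> S" unfolding d_def using \<open>nat \<bar>v p\<bar> \<in> S\<close> by (rule LeastI)
  have d_least: "d \<le> m" if "m \<in> S" for m unfolding d_def using that by (rule Least_le)
  from \<open>d \<in> S\<close> obtain h where h: "h \<in> H" "h p = int d" "h p > 0"
    unfolding S_def by auto
  have "h p dvd u p" if u: "u \<in> H" for u
  proof (rule ccontr)
    assume "\<not> h p dvd u p"
    then have pos: "u p mod h p > 0" using h(3) by (simp add: dvd_eq_mod_eq_0 order_neq_le_trans)
    let ?w = "\<lambda>j. u j + - (u p div h p) * h j"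
    have "?w \<in> H"
      by (rule int_lattice_add[OF H u int_lattice_smult[OF H h(1)]])
    moreover have "?w p = int (nat (u p mod h p))"
      using pos by (simp add: minus_div_mult_eq_mod[symmetric])
    ultimately have "nat (u p mod h p) \<in> S"
      using pos unfolding S_def by auto
    then have "d \<le> nat (u p mod h p)" by (rule d_least)
    then have "h p \<le> u p mod h p" using h(2) pos by (simp add: le_nat_iff)
    moreover have "u p mod h p < h p" using h(3) by simp
    ultimately show False by simp
  qed
  with h that show ?thesis by blast
qed

lemma int_lattice_slice:
  assumes "int_lattice (Suc r) H"
  shows "int_lattice r {v \<in> H. v r = 0}"
  unfolding int_lattice_def
proof (intro conjI ballI allI impI)
  fix v j assume v: "v \<in> {v \<in> H. v r = 0}" and "r \<le> j"
  then consider "j = r" | "Suc r \<le> j" by linarith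
  then show "v j = 0"
    using v assms unfolding int_lattice_def by cases auto
qed (use assms in \<open>auto simp: int_lattice_def\<close>)

definition int_basis :: "(nat \<Rightarrow> int) set \<Rightarrow> (nat \<Rightarrow> int) set \<Rightarrow> bool" where
  "int_basis B H \<longleftrightarrow> finite B \<and> B \<subseteq> H
     \<and> (\<forall>c. (\<forall>j. (\<Sum>b\<in>B. c b * b j) = 0) \<longrightarrow> (\<forall>b\<in>B. c b = 0))
     \<and> (\<forall>v\<in>H. \<exists>c. \<forall>j. v j = (\<Sum>b\<in>B. c b * b j))"

text \<open>Induction step of the basis construction: the pivot \<open>h\<close> and a basis of the
  sublattice \<open>v p = 0\<close> form a basis, since subtracting \<open>(v p div h p) * h\<close> moves any
  \<open>v\<close> into the sublattice.\<close>

lemma int_basis_insert_pivot: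
  assumes H: "int_lattice r H" and B0: "int_basis B0 {v \<in> H. v p = 0}"
    and h: "h \<in> H" "h p > 0" "\<And>u. u \<in> H \<Longrightarrow> h p dvd u p"
  shows "int_basis (insert h B0) H"
proof -
  have B0p: "b p = 0" if "b \<in> B0" for b using B0 that by (auto simp: int_basis_def)
  then have hB0: "h \<notin> B0" using h(2) by force
  have fin: "finite B0" using B0 by (simp add: int_basis_def)
  have sum_insert: "(\<Sum>b\<in>insert h B0. c b * b j) = c h * h j + (\<Sum>b\<in>B0. c b * b j)" for c j
    using fin hB0 by (rule sum.insert)
  have indep: "\<forall>b\<in>insert h B0. c b = 0" if c: "\<forall>j. (\<Sum>b\<in>insert h B0. c b * b j) = 0" for c
  proof -
    have "(\<Sum>b\<in>B0. c b * b p) = 0" using B0p by (intro sum.neutral) simp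
    with c sum_insert[of c p] h(2) have ch: "c h = 0" by simp
    with c sum_insert have "\<forall>j. (\<Sum>b\<in>B0. c b * b j) = 0" by simp
    with B0 ch show ?thesis by (auto simp: int_basis_def)
  qed
  have span: "\<exists>c. \<forall>j. v j = (\<Sum>b\<in>insert h B0. c b * b j)" if v: "v \<in> H" for v
  proof -
    define k where "k = - (v p div h p)"
    have "v p + k * h p = 0" using h(3)[OF v] by (simp add: k_def)
    moreover have "(\<lambda>j. v j + k * h j) \<in> H"
      by (rule int_lattice_add[OF H v int_lattice_smult[OF H h(1)]])
    ultimately have mem: "(\<lambda>j. v j + k * h j) \<in> {v \<in> H. v p = 0}" by blast
    have "\<forall>v\<in>{v \<in> H. v p = 0}. \<exists>c. \<forall>j. v j = (\<Sum>b\<in>B0. c b * b j)"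
      using B0 by (simp add: int_basis_def)
    from this[rule_format, OF mem]
    obtain c where c: "\<And>j. v j + k * h j = (\<Sum>b\<in>B0. c b * b j)" by blast
    have "(\<Sum>b\<in>B0. (c(h := - k)) b * b j) = (\<Sum>b\<in>B0. c b * b j)" for j
      using hB0 by (intro sum.cong) auto
    then have "v j = (\<Sum>b\<in>insert h B0. (c(h := - k)) b * b j)" for j
      using c[of j] sum_insert[of "c(h := - k)" j] by simp
    then show ?thesis by blast
  qed
  show ?thesis
    using fin B0 h(1) indep span by (auto simp: int_basis_def)
qed

lemma int_lattice_has_basis:
  assumes "int_lattice r H"
  shows "\<exists>B. int_basis B H"
  using assms
proof (induction r arbitrary: H)
  case 0
  then have "H \<subseteq> {\<lambda>_. 0}" unfolding int_lattice_def by (auto simp: fun_eq_iff)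
  then have "int_basis {} H" by (auto simp: int_basis_def)
  then show ?case by blast
next
  case (Suc r)
  obtain B0 where B0: "int_basis B0 {v \<in> H. v r = 0}"
    using Suc.IH[OF int_lattice_slice[OF Suc.prems]] by blast
  show ?case
  proof (cases "\<forall>v\<in>H. v r = 0")
    case True
    then have "{v \<in> H. v r = 0} = H" by blast
    with B0 show ?thesis by auto
  next
    case False
    then obtain v where "v \<in> H" "v r \<noteq> 0" by blast
    then obtain h where "h \<in> H" "h r > 0" "\<And>u. u \<in> H \<Longrightarrow> h r dvd u r"
      by (rule int_lattice_pivot[OF Suc.prems]) blast
    with int_basis_insert_pivot[OF Suc.prems B0] show ?thesis by blast
  qed
qed

context comm_group
begin

lemma torsion_subgroup_is_subgroup: "subgroup (torsion_subgroup G) G"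
proof
  show "torsion_subgroup G \<subseteq> carrier G" by (auto simp: torsion_subgroup_def)
  show "\<one> \<in> torsion_subgroup G" by (auto simp: torsion_subgroup_def intro!: exI[of _ 1])
next
  fix x y assume "x \<in> torsion_subgroup G" "y \<in> torsion_subgroup G"
  then obtain m n :: nat where mn: "m > 0" "x [^] m = \<one>" "x \<in> carrier G"
    "n > 0" "y [^] n = \<one>" "y \<in> carrier G"
    by (auto simp: torsion_subgroup_def)
  have "(x \<otimes> y) [^] (m * n) = (x [^] m) [^] n \<otimes> (y [^] n) [^] m"
    using mn(3,6) by (simp add: nat_pow_distrib nat_pow_pow mult.commute[of n m])
  also have "\<dots> = \<one>" using mn by simp
  finally show "x \<otimes> y \<in> torsion_subgroup G"
    using mn by (auto simp: torsion_subgroup_def intro!: exI[of _ "m * n"])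
next
  fix x assume "x \<in> torsion_subgroup G"
  then obtain m :: nat where "m > 0" "x [^] m = \<one>" "x \<in> carrier G"
    by (auto simp: torsion_subgroup_def)
  then show "inv x \<in> torsion_subgroup G"
    by (auto simp: torsion_subgroup_def nat_pow_inv intro!: exI[of _ m])
qed

lemma torsion_subgroupI:
  assumes "x \<in> carrier G" "x [^] (N::int) = \<one>" "N \<noteq> 0"
  shows "x \<in> torsion_subgroup G"
proof -
  have "x [^] (- N) = \<one>" using assms by (simp add: int_pow_neg)
  with assms(2) have "x [^] int (nat \<bar>N\<bar>) = \<one>" by (cases "N \<ge> 0") auto
  with assms show ?thesis
    by (auto simp: torsion_subgroup_def int_pow_int intro!: exI[of _ "nat \<bar>N\<bar>"])
qed

end

definition torsion_complement_basis :: "('a, 'b) monoid_scheme \<Rightarrow> ('i \<Rightarrow> 'a) \<Rightarrow> 'i set \<Rightarrow> bool" where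
  "torsion_complement_basis G \<beta> B \<longleftrightarrow> finite B \<and> \<beta> ` B \<subseteq> carrier G \<and> lin_indep G \<beta> B
     \<and> (\<forall>x\<in>carrier G. \<exists>t\<in>torsion_subgroup G. \<exists>c. x = t \<otimes>\<^bsub>G\<^esub> lin_comb G \<beta> c B)"

context comm_group
begin

lemma torsion_complement_decomp_unique:
  assumes B: "torsion_complement_basis G \<beta> B"
    and t: "t \<in> torsion_subgroup G" "t' \<in> torsion_subgroup G"
    and eq: "t \<otimes> lin_comb G \<beta> c B = t' \<otimes> lin_comb G \<beta> c' B"
  shows "t = t'" and "\<forall>b\<in>B. c b = c' b"
proof -
  have T: "subgroup (torsion_subgroup G) G" by (rule torsion_subgroup_is_subgroup)
  have \<beta>: "\<beta> ` B \<subseteq> carrier G" and ind: "lin_indep G \<beta> B"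
    using B by (auto simp: torsion_complement_basis_def)
  define D where "D = lin_comb G \<beta> (\<lambda>b. c b - c' b) B"
  have tc: "t \<in> carrier G" "t' \<in> carrier G" using t subgroup.subset[OF T] by auto
  have L: "lin_comb G \<beta> c B \<in> carrier G" "lin_comb G \<beta> c' B \<in> carrier G" using \<beta> by auto
  have "inv t \<otimes> t' = inv t \<otimes> (t' \<otimes> lin_comb G \<beta> c' B) \<otimes> inv (lin_comb G \<beta> c' B)"
    using tc L by (simp add: m_assoc)
  also have "\<dots> = lin_comb G \<beta> c B \<otimes> inv (lin_comb G \<beta> c' B)"
    using tc L by (simp add: eq[symmetric] m_assoc[symmetric])
  also have "\<dots> = D" unfolding D_def using \<beta> by (rule lin_comb_diff[symmetric])
  finally have "D \<in> torsion_subgroup G"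
    using t subgroup.m_closed[OF T] subgroup.m_inv_closed[OF T] by metis
  then have "\<exists>n::nat. n > 0 \<and> D [^] n = \<one>" by (simp add: torsion_subgroup_def)
  then obtain n :: nat where n: "n > 0" "D [^] n = \<one>" by blast
  have "lin_comb G \<beta> (\<lambda>b. int n * (c b - c' b)) B = D [^] int n"
    unfolding D_def using \<beta> by (rule lin_comb_int_pow[symmetric])
  also have "\<dots> = \<one>" using n(2) by (simp add: int_pow_int)
  finally have "\<forall>b\<in>B. int n * (c b - c' b) = 0" using ind unfolding lin_indep_def by blast
  with n(1) show "\<forall>b\<in>B. c b = c' b" by simp
  then have "lin_comb G \<beta> c B = lin_comb G \<beta> c' B" using \<beta> by (intro lin_comb_coeff_cong) auto
  with eq tc L show "t = t'" by simp
qed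

lemma torsion_complement_power_span:
  assumes B: "torsion_complement_basis G \<beta> B" and x: "x \<in> carrier G"
  shows "\<exists>n c. n \<noteq> 0 \<and> x [^] (n::int) = lin_comb G \<beta> c B"
proof -
  have \<beta>B: "\<beta> ` B \<subseteq> carrier G" using B by (simp add: torsion_complement_basis_def)
  obtain t c where tc: "t \<in> torsion_subgroup G" "x = t \<otimes> lin_comb G \<beta> c B"
    using B x by (auto simp: torsion_complement_basis_def)
  then obtain n :: nat where n: "n > 0" "t [^] n = \<one>" "t \<in> carrier G"
    unfolding torsion_subgroup_def by blast
  have "x [^] int n = t [^] int n \<otimes> lin_comb G \<beta> c B [^] int n"
    using tc n \<beta>B by (simp add: int_pow_distrib)
  also have "t [^] int n = \<one>" using n by (simp add: int_pow_int)
  also have "lin_comb G \<beta> c B [^] int n = lin_comb G \<beta> (\<lambda>b. int n * c b) B"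
    using \<beta>B by (rule lin_comb_int_pow)
  finally have "x [^] int n = lin_comb G \<beta> (\<lambda>b. int n * c b) B" using \<beta>B by simp
  with n(1) show ?thesis by (metis of_nat_0_less_iff less_irrefl)
qed

end

text \<open>If the \<open>N\<close>-th power of every element lies in the span of an independent family
  \<open>e 0, \<dots>, e (r - 1)\<close>, then \<open>coord x\<close>, the coordinate vector of \<open>x\<^sup>N\<close>, is a homomorphism
  onto a lattice in \<open>\<int>\<^sup>r\<close> whose kernel is the torsion subgroup.\<close>

locale power_coordinates = comm_group +
  fixes e :: "nat \<Rightarrow> 'a" and r :: nat and N :: int
  assumes e_carrier: "e ` {..<r} \<subseteq> carrier G"
    and e_indep: "lin_indep G e {..<r}"
    and N_nonzero: "N \<noteq> 0"
    and power_in_span: "\<And>x. x \<in> carrier G \<Longrightarrow> \<exists>c. x [^] N = lin_comb G e c {..<r}"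
begin

definition coord :: "'a \<Rightarrow> nat \<Rightarrow> int" where
  "coord x = (THE v. x [^] N = lin_comb G e v {..<r} \<and> (\<forall>i\<ge>r. v i = 0))"

lemma coord_unique:
  assumes "lin_comb G e v {..<r} = lin_comb G e v' {..<r}" "\<forall>i\<ge>r. v i = 0" "\<forall>i\<ge>r. v' i = 0"
  shows "v = v'"
proof -
  have "lin_comb G e (\<lambda>i. v i - v' i) {..<r} = \<one>"
    using assms(1) e_carrier by (simp add: lin_comb_diff)
  then have "\<forall>i<r. v i = v' i" using e_indep unfolding lin_indep_def by auto
  with assms(2,3) show ?thesis by (metis ext not_le)
qed

lemma coord:
  assumes "x \<in> carrier G"
  shows "x [^] N = lin_comb G e (coord x) {..<r}" "\<forall>i\<ge>r. coord x i = 0"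
proof -
  obtain c where c: "x [^] N = lin_comb G e c {..<r}" using power_in_span[OF assms] by blast
  let ?v = "\<lambda>i. if i < r then c i else 0"
  have "x [^] N = lin_comb G e ?v {..<r} \<and> (\<forall>i\<ge>r. ?v i = 0)"
    using c e_carrier by (auto intro: lin_comb_coeff_cong)
  then have "\<exists>!v. x [^] N = lin_comb G e v {..<r} \<and> (\<forall>i\<ge>r. v i = 0)"
    using coord_unique by (intro ex1I[of _ ?v]) auto
  then have "x [^] N = lin_comb G e (coord x) {..<r} \<and> (\<forall>i\<ge>r. coord x i = 0)"
    unfolding coord_def by (rule theI')
  then show "x [^] N = lin_comb G e (coord x) {..<r}" "\<forall>i\<ge>r. coord x i = 0" by auto
qed

lemma coord_eqI:
  assumes "x \<in> carrier G" "x [^] N = lin_comb G e v {..<r}" "\<forall>i\<ge>r. v i = 0"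
  shows "coord x = v"
  using coord[OF assms(1)] assms(2,3) by (intro coord_unique) auto

lemma coord_one: "coord \<one> = (\<lambda>_. 0)"
  by (rule coord_eqI) auto

lemma coord_mult:
  assumes "x \<in> carrier G" "y \<in> carrier G"
  shows "coord (x \<otimes> y) = (\<lambda>i. coord x i + coord y i)"
proof (rule coord_eqI)
  have "(x \<otimes> y) [^] N = x [^] N \<otimes> y [^] N" using assms by (rule int_pow_distrib)
  also have "\<dots> = lin_comb G e (\<lambda>i. coord x i + coord y i) {..<r}"
    using assms e_carrier by (simp add: coord lin_comb_add)
  finally show "(x \<otimes> y) [^] N = lin_comb G e (\<lambda>i. coord x i + coord y i) {..<r}" .
qed (use assms coord in auto)

lemma coord_inv:
  assumes "x \<in> carrier G"
  shows "coord (inv x) = (\<lambda>i. - coord x i)"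
proof (rule coord_eqI)
  have "inv x [^] N = inv (x [^] N)" using assms by (rule int_pow_inv)
  also have "\<dots> = lin_comb G e (\<lambda>i. - coord x i) {..<r}"
    using assms e_carrier by (simp add: coord lin_comb_neg)
  finally show "inv x [^] N = lin_comb G e (\<lambda>i. - coord x i) {..<r}" .
qed (use assms coord in auto)

lemma coord_lin_comb:
  assumes "finite B" "\<beta> ` B \<subseteq> carrier G"
  shows "coord (lin_comb G \<beta> c B) = (\<lambda>i. \<Sum>b\<in>B. c b * coord (\<beta> b) i)"
proof (rule coord_eqI)
  have "lin_comb G \<beta> c B [^] N = lin_comb G \<beta> (\<lambda>b. N * c b) B"
    using assms(2) by (rule lin_comb_int_pow)
  also have "\<dots> = lin_comb G (\<lambda>b. \<beta> b [^] N) c B"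
    using assms by (intro lin_comb_cong) (auto simp: int_pow_pow)
  also have "\<dots> = lin_comb G e (\<lambda>i. \<Sum>b\<in>B. c b * coord (\<beta> b) i) {..<r}"
    using assms e_carrier coord by (intro lin_comb_lin_comb) auto
  finally show "lin_comb G \<beta> c B [^] N = lin_comb G e (\<lambda>i. \<Sum>b\<in>B. c b * coord (\<beta> b) i) {..<r}" .
  show "\<forall>i\<ge>r. (\<Sum>b\<in>B. c b * coord (\<beta> b) i) = 0"
    using assms(2) coord(2) by (auto intro!: sum.neutral)
qed (use assms in auto)

lemma coord_eq_zero_imp_torsion:
  assumes "x \<in> carrier G" "coord x = (\<lambda>_. 0)"
  shows "x \<in> torsion_subgroup G"
  using coord(1)[OF assms(1)] assms N_nonzero by (intro torsion_subgroupI) auto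

lemma int_lattice_coord_image: "int_lattice r (coord ` carrier G)"
  unfolding int_lattice_def
proof (intro conjI ballI allI impI)
  show "(\<lambda>_. 0) \<in> coord ` carrier G" by (rule image_eqI[where x = \<one>]) (simp_all add: coord_one)
  fix u v assume "u \<in> coord ` carrier G" "v \<in> coord ` carrier G"
  then show "(\<lambda>j. u j + v j) \<in> coord ` carrier G"
    by (auto simp: coord_mult[symmetric] intro!: imageI)
next
  fix v assume "v \<in> coord ` carrier G"
  then show "(\<lambda>j. - v j) \<in> coord ` carrier G"
    by (auto simp: coord_inv[symmetric] intro!: imageI)
next
  fix v j assume "v \<in> coord ` carrier G" "r \<le> j"
  then show "v j = 0" using coord(2) by auto
qed

lemma torsion_complement_basis_lift:
  assumes B: "int_basis B (coord ` carrier G)"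
    and \<beta>: "\<And>b. b \<in> B \<Longrightarrow> \<beta> b \<in> carrier G \<and> coord (\<beta> b) = b"
  shows "torsion_complement_basis G \<beta> B" and "card B = r"
proof -
  have fB: "finite B" using B by (simp add: int_basis_def)
  have \<beta>B: "\<beta> ` B \<subseteq> carrier G" using \<beta> by blast
  have coord_\<beta>: "coord (lin_comb G \<beta> c B) = (\<lambda>i. \<Sum>b\<in>B. c b * b i)" for c
    using \<beta> by (simp add: coord_lin_comb[OF fB \<beta>B])
  have ind: "lin_indep G \<beta> B" unfolding lin_indep_def
  proof (intro allI impI)
    fix c assume "lin_comb G \<beta> c B = \<one>"
    then have "(\<lambda>i. \<Sum>b\<in>B. c b * b i) = (\<lambda>_. 0)" using coord_\<beta>[of c] coord_one by simp
    with B show "\<forall>b\<in>B. c b = 0" by (simp add: int_basis_def fun_eq_iff)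
  qed
  have "\<exists>t\<in>torsion_subgroup G. \<exists>c. x = t \<otimes> lin_comb G \<beta> c B" if x: "x \<in> carrier G" for x
  proof -
    obtain c where c: "\<forall>j. coord x j = (\<Sum>b\<in>B. c b * b j)"
      using B x unfolding int_basis_def by blast
    define L where "L = lin_comb G \<beta> c B"
    have L: "L \<in> carrier G" using \<beta>B by (simp add: L_def)
    have "coord (x \<otimes> inv L) = (\<lambda>_. 0)"
      using x L c coord_\<beta>[of c] by (simp add: coord_mult coord_inv L_def)
    then have "x \<otimes> inv L \<in> torsion_subgroup G" using x L by (intro coord_eq_zero_imp_torsion) auto
    moreover have "x = (x \<otimes> inv L) \<otimes> L" using x L by (simp add: m_assoc)
    ultimately show ?thesis unfolding L_def by blast
  qed
  with fB \<beta>B ind show tcb: "torsion_complement_basis G \<beta> B"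
    unfolding torsion_complement_basis_def by blast
  have "card B \<le> card {..<r}"
  proof (rule lin_indep_card_le_power_span[OF fB _ \<beta>B e_carrier ind])
    fix b assume "b \<in> B"
    then have "\<beta> b [^] N = lin_comb G e (coord (\<beta> b)) {..<r}" using \<beta> coord(1) by blast
    with N_nonzero show "\<exists>n c. n \<noteq> 0 \<and> \<beta> b [^] (n::int) = lin_comb G e c {..<r}" by blast
  qed simp
  moreover have "card {..<r} \<le> card B"
    using e_carrier by (intro lin_indep_card_le_power_span[OF _ fB e_carrier \<beta>B e_indep]
        torsion_complement_power_span[OF tcb]) auto
  ultimately show "card B = r" by simp
qed

lemma torsion_complement_basis_exists:
  obtains B :: "(nat \<Rightarrow> int) set" and \<beta> where "torsion_complement_basis G \<beta> B" "card B = r"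
proof -
  obtain B where B: "int_basis B (coord ` carrier G)"
    using int_lattice_has_basis[OF int_lattice_coord_image] by blast
  then have "\<forall>b\<in>B. \<exists>x. x \<in> carrier G \<and> coord x = b" by (auto simp: int_basis_def)
  then obtain \<beta> where "\<And>b. b \<in> B \<Longrightarrow> \<beta> b \<in> carrier G \<and> coord (\<beta> b) = b" by metis
  from torsion_complement_basis_lift[OF B this] that show ?thesis by blast
qed

end

context comm_group
begin

lemma common_power_in_span:
  assumes w: "lin_spans G w J" and e: "e ` E \<subseteq> carrier G"
    and power: "\<And>x. x \<in> carrier G \<Longrightarrow> \<exists>m c. m \<noteq> 0 \<and> x [^] (m::int) = lin_comb G e c E"
  shows "\<exists>N::int. N \<noteq> 0 \<and> (\<forall>x\<in>carrier G. \<exists>c. x [^] N = lin_comb G e c E)"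
proof -
  have J: "finite J" "w ` J \<subseteq> carrier G" using w by (auto simp: lin_spans_def)
  have "\<forall>j\<in>J. \<exists>m. m \<noteq> 0 \<and> (\<exists>c. w j [^] (m::int) = lin_comb G e c E)"
    using power J(2) by blast
  then obtain m where m: "\<And>j. j \<in> J \<Longrightarrow> m j \<noteq> 0 \<and> (\<exists>c. w j [^] (m j :: int) = lin_comb G e c E)"
    by metis
  define N where "N = (\<Prod>j\<in>J. m j)"
  have gen: "\<exists>c. w j [^] N = lin_comb G e c E" if j: "j \<in> J" for j
  proof -
    obtain c where c: "w j [^] m j = lin_comb G e c E" using m[OF j] by blast
    obtain q where q: "N = m j * q" using dvd_prodI[OF J(1) j] unfolding N_def by blast
    have "w j \<in> carrier G" using J(2) j by blast
    then have "w j [^] N = (w j [^] m j) [^] q" by (simp add: int_pow_pow q)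
    also have "\<dots> = lin_comb G e (\<lambda>i. q * c i) E" using c e by (simp add: lin_comb_int_pow)
    finally show ?thesis by blast
  qed
  then obtain C where C: "\<And>j. j \<in> J \<Longrightarrow> w j [^] N = lin_comb G e (C j) E" by metis
  have "\<exists>c. x [^] N = lin_comb G e c E" if x: "x \<in> carrier G" for x
  proof -
    obtain c where c: "x = lin_comb G w c J" using w x by (auto simp: lin_spans_def)
    have "x [^] N = lin_comb G w (\<lambda>j. N * c j) J" using c J(2) by (simp add: lin_comb_int_pow)
    also have "\<dots> = lin_comb G (\<lambda>j. w j [^] N) c J"
      using J(2) by (intro lin_comb_cong) (auto simp: int_pow_pow mult.commute)
    also have "\<dots> = lin_comb G e (\<lambda>i. \<Sum>j\<in>J. c j * C j i) E"
      using J e C by (intro lin_comb_lin_comb) auto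
    finally show ?thesis by blast
  qed
  moreover have "N \<noteq> 0" using m J(1) by (simp add: N_def)
  ultimately show ?thesis by blast
qed

lemma fin_gen_torsion_complement_basis:
  assumes "lin_spans G w J"
  obtains B :: "(nat \<Rightarrow> int) set" and \<beta>
  where "torsion_complement_basis G \<beta> B" "card B = grp_rank G (carrier G)"
proof -
  let ?r = "grp_rank G (carrier G)"
  obtain e where e: "\<forall>i<?r. e i \<in> carrier G" "int_indep G ?r e"
    using grp_rank_witness[OF assms subset_refl] .
  have e_carrier: "e ` {..<?r} \<subseteq> carrier G" using e by auto
  have power: "\<exists>m c. m \<noteq> 0 \<and> x [^] (m::int) = lin_comb G e c {..<?r}" if "x \<in> carrier G" for x
    using grp_rank_maximal[OF assms subset_refl e that] .
  have "\<exists>N::int. N \<noteq> 0 \<and> (\<forall>x\<in>carrier G. \<exists>c. x [^] N = lin_comb G e c {..<?r})"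
    by (rule common_power_in_span[OF assms e_carrier]) (rule power)
  then obtain N :: int where "N \<noteq> 0" "\<forall>x\<in>carrier G. \<exists>c. x [^] N = lin_comb G e c {..<?r}"
    by blast
  with e interpret power_coordinates G e ?r N
    by unfold_locales (auto simp: int_indep_iff_lin_indep)
  from torsion_complement_basis_exists that show ?thesis by metis
qed

lemma torsion_complement_hom_eqI:
  fixes K :: "('c, 'd) monoid_scheme"
  assumes B: "torsion_complement_basis G \<beta> B" and K: "comm_group K"
    and \<phi>: "\<phi> \<in> hom G K" "\<phi>' \<in> hom G K"
    and tor: "\<And>t. t \<in> torsion_subgroup G \<Longrightarrow> \<phi> t = \<phi>' t"
    and basis: "\<And>b. b \<in> B \<Longrightarrow> \<phi> (\<beta> b) = \<phi>' (\<beta> b)"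
    and x: "x \<in> carrier G"
  shows "\<phi> x = \<phi>' x"
proof -
  interpret K: comm_group K by fact
  have \<beta>B: "\<beta> ` B \<subseteq> carrier G" using B by (simp add: torsion_complement_basis_def)
  obtain t c where t: "t \<in> torsion_subgroup G" and x_eq: "x = t \<otimes> lin_comb G \<beta> c B"
    using B x by (auto simp: torsion_complement_basis_def)
  have tc: "t \<in> carrier G" using t by (simp add: torsion_subgroup_def)
  have "\<phi> x = \<phi> t \<otimes>\<^bsub>K\<^esub> lin_comb K (\<lambda>b. \<phi> (\<beta> b)) c B"
    using x_eq tc \<beta>B \<phi>(1) K by (simp add: hom_mult lin_comb_hom)
  also have "lin_comb K (\<lambda>b. \<phi> (\<beta> b)) c B = lin_comb K (\<lambda>b. \<phi>' (\<beta> b)) c B"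
    using basis \<beta>B \<phi>(2) by (intro K.lin_comb_cong) (auto intro: hom_in_carrier)
  also have "\<phi> t \<otimes>\<^bsub>K\<^esub> lin_comb K (\<lambda>b. \<phi>' (\<beta> b)) c B
      = \<phi>' t \<otimes>\<^bsub>K\<^esub> lin_comb K (\<lambda>b. \<phi>' (\<beta> b)) c B"
    by (simp add: tor[OF t])
  also have "\<dots> = \<phi>' x"
    using x_eq tc \<beta>B \<phi>(2) K by (simp add: hom_mult lin_comb_hom)
  finally show ?thesis .
qed

lemma torsion_complement_decomp_fun:
  assumes B: "torsion_complement_basis G \<beta> B"
  obtains D :: "'a \<Rightarrow> 'a \<times> ('i \<Rightarrow> int)" where
    "\<And>x. x \<in> carrier G \<Longrightarrow> fst (D x) \<in> torsion_subgroup G \<and> x = fst (D x) \<otimes> lin_comb G \<beta> (snd (D x)) B"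
    "\<And>t c. t \<in> torsion_subgroup G \<Longrightarrow> fst (D (t \<otimes> lin_comb G \<beta> c B)) = t
       \<and> (\<forall>b\<in>B. snd (D (t \<otimes> lin_comb G \<beta> c B)) b = c b)"
proof -
  have "\<forall>x\<in>carrier G. \<exists>q. fst q \<in> torsion_subgroup G \<and> x = fst q \<otimes> lin_comb G \<beta> (snd q) B"
    using B unfolding torsion_complement_basis_def by fastforce
  then obtain D where D: "\<And>x. x \<in> carrier G \<Longrightarrow>
      fst (D x) \<in> torsion_subgroup G \<and> x = fst (D x) \<otimes> lin_comb G \<beta> (snd (D x)) B"
    by metis
  moreover have "fst (D (t \<otimes> lin_comb G \<beta> c B)) = t
      \<and> (\<forall>b\<in>B. snd (D (t \<otimes> lin_comb G \<beta> c B)) b = c b)"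
    if t: "t \<in> torsion_subgroup G" for t c
  proof -
    let ?x = "t \<otimes> lin_comb G \<beta> c B"
    have "?x \<in> carrier G"
      using t B subgroup.mem_carrier[OF torsion_subgroup_is_subgroup]
      by (auto simp: torsion_complement_basis_def)
    with D have "fst (D ?x) \<in> torsion_subgroup G"
      and "fst (D ?x) \<otimes> lin_comb G \<beta> (snd (D ?x)) B = t \<otimes> lin_comb G \<beta> c B"
      by (metis, metis)
    from torsion_complement_decomp_unique[OF B this(1) t this(2)] show ?thesis by auto
  qed
  ultimately show ?thesis using that by blast
qed

text \<open>A homomorphism on the torsion subgroup extends, with prescribed values on the
  basis \<open>\<beta>\<close>, by \<open>t \<otimes> \<Prod> \<beta> b [^] c b \<mapsto> \<psi> t \<otimes> \<Prod> g b [^] c b\<close>; this is well defined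
  by uniqueness of the decomposition.\<close>

lemma torsion_complement_hom_extend:
  fixes K :: "('c, 'd) monoid_scheme"
  assumes B: "torsion_complement_basis G \<beta> B" and K: "comm_group K"
    and \<psi>: "\<psi> \<in> hom (G\<lparr>carrier := torsion_subgroup G\<rparr>) K" and g: "g \<in> B \<rightarrow> carrier K"
  obtains \<phi> where "\<phi> \<in> hom G K" "\<And>t. t \<in> torsion_subgroup G \<Longrightarrow> \<phi> t = \<psi> t"
    "\<And>b. b \<in> B \<Longrightarrow> \<phi> (\<beta> b) = g b"
proof -
  interpret K: comm_group K by fact
  define T where "T = torsion_subgroup G"
  have T: "subgroup T G" unfolding T_def by (rule torsion_subgroup_is_subgroup)
  have \<beta>B: "\<beta> ` B \<subseteq> carrier G" and fB: "finite B"
    using B by (auto simp: torsion_complement_basis_def)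
  have \<psi>c: "\<psi> t \<in> carrier K" if "t \<in> T" for t
    using \<psi> that by (auto simp: hom_def T_def)
  have \<psi>_mult: "\<psi> (t \<otimes> s) = \<psi> t \<otimes>\<^bsub>K\<^esub> \<psi> s" if "t \<in> T" "s \<in> T" for t s
    using \<psi> that by (auto simp: hom_def T_def)
  have \<psi>_one: "\<psi> \<one> = \<one>\<^bsub>K\<^esub>"
    using hom_one[OF \<psi> subgroup.subgroup_is_group[OF T[unfolded T_def] is_group] K.is_group] by simp
  have gK: "g ` B \<subseteq> carrier K" using g by auto
  obtain D where D: "\<And>x. x \<in> carrier G \<Longrightarrow> fst (D x) \<in> T \<and> x = fst (D x) \<otimes> lin_comb G \<beta> (snd (D x)) B"
    "\<And>t c. t \<in> T \<Longrightarrow> fst (D (t \<otimes> lin_comb G \<beta> c B)) = t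
       \<and> (\<forall>b\<in>B. snd (D (t \<otimes> lin_comb G \<beta> c B)) b = c b)"
    using torsion_complement_decomp_fun[OF B] unfolding T_def by metis
  define \<phi> where "\<phi> x = \<psi> (fst (D x)) \<otimes>\<^bsub>K\<^esub> lin_comb K g (snd (D x)) B" for x
  have \<phi>_eq: "\<phi> (t \<otimes> lin_comb G \<beta> c B) = \<psi> t \<otimes>\<^bsub>K\<^esub> lin_comb K g c B" if "t \<in> T" for t c
  proof -
    have "lin_comb K g (snd (D (t \<otimes> lin_comb G \<beta> c B))) B = lin_comb K g c B"
      using D(2)[OF that, of c] gK by (intro K.lin_comb_coeff_cong) auto
    with D(2)[OF that, of c] show ?thesis by (simp add: \<phi>_def)
  qed
  have "\<phi> \<in> hom G K"
  proof (rule homI)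
    fix x assume "x \<in> carrier G"
    then show "\<phi> x \<in> carrier K" using D(1) \<psi>c gK by (simp add: \<phi>_def)
  next
    fix x y assume "x \<in> carrier G" "y \<in> carrier G"
    then obtain t c s d where ts: "t \<in> T" "s \<in> T"
      and xy: "x = t \<otimes> lin_comb G \<beta> c B" "y = s \<otimes> lin_comb G \<beta> d B"
      using D(1) by metis
    have tsG: "t \<in> carrier G" "s \<in> carrier G" using ts T by (auto dest: subgroup.mem_carrier)
    have "x \<otimes> y = (t \<otimes> s) \<otimes> lin_comb G \<beta> (\<lambda>b. c b + d b) B"
      using xy tsG \<beta>B by (simp add: lin_comb_add m_ac)
    then have "\<phi> (x \<otimes> y) = \<psi> (t \<otimes> s) \<otimes>\<^bsub>K\<^esub> lin_comb K g (\<lambda>b. c b + d b) B"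
      using ts T by (simp add: \<phi>_eq subgroup.m_closed)
    also have "\<dots> = \<phi> x \<otimes>\<^bsub>K\<^esub> \<phi> y"
      using ts xy gK \<psi>c by (simp add: \<phi>_eq \<psi>_mult K.lin_comb_add K.m_ac)
    finally show "\<phi> (x \<otimes> y) = \<phi> x \<otimes>\<^bsub>K\<^esub> \<phi> y" .
  qed
  moreover have "\<phi> t = \<psi> t" if "t \<in> T" for t
    using \<phi>_eq[OF that, of "\<lambda>_. 0"] that T \<psi>c by (auto dest: subgroup.mem_carrier)
  moreover have "\<phi> (\<beta> b) = g b" if b: "b \<in> B" for b
  proof -
    have "\<beta> b = \<one> \<otimes> lin_comb G \<beta> (\<lambda>i. if i = b then 1 else 0) B"
      using b fB \<beta>B by (simp add: lin_comb_indicator image_subset_iff)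
    then show ?thesis
      using \<phi>_eq[OF subgroup.one_closed[OF T]] b fB gK \<psi>_one by (simp add: K.lin_comb_indicator)
  qed
  ultimately show ?thesis using that unfolding T_def by blast
qed

lemma card_Hom_torsion_complement:
  fixes K :: "('c, 'd) monoid_scheme"
  assumes B: "torsion_complement_basis G \<beta> B" and K: "comm_group K"
  shows "card (Hom G K)
    = card (Hom (G\<lparr>carrier := torsion_subgroup G\<rparr>) K) * card (carrier K) ^ card B"
proof -
  define T where "T = torsion_subgroup G"
  have T: "subgroup T G" unfolding T_def by (rule torsion_subgroup_is_subgroup)
  then have TG: "T \<subseteq> carrier G" by (rule subgroup.subset)
  have \<beta>B: "\<beta> ` B \<subseteq> carrier G" and fB: "finite B"
    using B by (auto simp: torsion_complement_basis_def)
  define \<Phi> where "\<Phi> \<phi> = (restrict \<phi> T, restrict (\<phi> \<circ> \<beta>) B)" for \<phi> :: "'a \<Rightarrow> 'c"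
  have "bij_betw \<Phi> (Hom G K) (Hom (G\<lparr>carrier := T\<rparr>) K \<times> (\<Pi>\<^sub>E b\<in>B. carrier K))"
  proof (rule bij_betwI')
    fix \<phi> \<phi>' assume \<phi>: "\<phi> \<in> Hom G K" "\<phi>' \<in> Hom G K"
    show "(\<Phi> \<phi> = \<Phi> \<phi>') = (\<phi> = \<phi>')"
    proof
      assume "\<Phi> \<phi> = \<Phi> \<phi>'"
      then have "\<forall>t\<in>T. \<phi> t = \<phi>' t" "\<forall>b\<in>B. \<phi> (\<beta> b) = \<phi>' (\<beta> b)"
        by (auto simp: \<Phi>_def restrict_def fun_eq_iff split: if_splits)
      then have "\<phi> x = \<phi>' x" if "x \<in> carrier G" for x
        using torsion_complement_hom_eqI[OF B K _ _ _ _ that] \<phi> by (auto simp: Hom_def T_def)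
      with \<phi> show "\<phi> = \<phi>'" by (auto simp: Hom_def intro: extensionalityI)
    qed simp
  next
    fix \<phi> assume "\<phi> \<in> Hom G K"
    then show "\<Phi> \<phi> \<in> Hom (G\<lparr>carrier := T\<rparr>) K \<times> (\<Pi>\<^sub>E b\<in>B. carrier K)"
      using TG \<beta>B subgroup.m_closed[OF T] by (auto simp: \<Phi>_def Hom_def hom_def Pi_def subset_iff)
  next
    fix p assume "p \<in> Hom (G\<lparr>carrier := T\<rparr>) K \<times> (\<Pi>\<^sub>E b\<in>B. carrier K)"
    then obtain \<psi> g where p: "p = (\<psi>, g)" "\<psi> \<in> hom (G\<lparr>carrier := T\<rparr>) K" "\<psi> \<in> extensional T"
      "g \<in> B \<rightarrow> carrier K" "g \<in> extensional B"
      by (auto simp: Hom_def PiE_def)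
    then obtain \<phi> where \<phi>: "\<phi> \<in> hom G K" "\<And>t. t \<in> T \<Longrightarrow> \<phi> t = \<psi> t" "\<And>b. b \<in> B \<Longrightarrow> \<phi> (\<beta> b) = g b"
      using torsion_complement_hom_extend[OF B K] unfolding T_def by metis
    have "restrict \<phi> (carrier G) \<in> Hom G K"
      using \<phi>(1) by (auto simp: Hom_def hom_def)
    moreover have "p = \<Phi> (restrict \<phi> (carrier G))"
      using p \<phi> TG \<beta>B by (auto simp: \<Phi>_def fun_eq_iff extensional_def)
    ultimately show "\<exists>\<phi>\<in>Hom G K. p = \<Phi> \<phi>" by blast
  qed
  then have "card (Hom G K) = card (Hom (G\<lparr>carrier := T\<rparr>) K) * card (\<Pi>\<^sub>E b\<in>B. carrier K)"
    by (simp add: bij_betw_same_card card_cartesian_product)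
  with fB show ?thesis by (simp add: card_PiE T_def)
qed

lemma card_Hom_fin_gen:
  fixes K :: "('c, 'd) monoid_scheme"
  assumes "lin_spans G w J" "comm_group K"
  shows "card (Hom G K)
    = card (Hom (G\<lparr>carrier := torsion_subgroup G\<rparr>) K) * card (carrier K) ^ grp_rank G (carrier G)"
proof -
  obtain B :: "(nat \<Rightarrow> int) set" and \<beta>
    where "torsion_complement_basis G \<beta> B" "card B = grp_rank G (carrier G)"
    using fin_gen_torsion_complement_basis[OF assms(1)] .
  with card_Hom_torsion_complement[OF _ assms(2)] show ?thesis by metis
qed

lemma r_coset_hom_FactGroup: "subgroup H G \<Longrightarrow> (\<lambda>x. H #> x) \<in> hom G (G Mod H)"
  using normal.r_coset_hom_Mod subgroup_imp_normal by blast

lemma r_coset_eq_one_iff: "subgroup H G \<Longrightarrow> x \<in> carrier G \<Longrightarrow> H #> x = H \<longleftrightarrow> x \<in> H"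
  using coset_join1 coset_join2 by blast

lemma lin_spans_FactGroup:
  assumes "lin_spans G w J" "subgroup H G"
  shows "lin_spans (G Mod H) (\<lambda>j. H #> w j) J"
proof -
  have J: "finite J" "w ` J \<subseteq> carrier G" using assms(1) by (auto simp: lin_spans_def)
  have \<pi>: "(\<lambda>x. H #> x) \<in> hom G (G Mod H)" by (rule r_coset_hom_FactGroup[OF assms(2)])
  have "\<exists>c. U = lin_comb (G Mod H) (\<lambda>j. H #> w j) c J" if U: "U \<in> carrier (G Mod H)" for U
  proof -
    obtain x where x: "x \<in> carrier G" "U = H #> x" using U by (auto simp: carrier_FactGroup)
    then obtain c where "x = lin_comb G w c J" using assms(1) by (auto simp: lin_spans_def)
    with x have "U = lin_comb (G Mod H) (\<lambda>j. H #> w j) c J"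
      using lin_comb_hom[OF abelian_FactGroup[OF assms(2)] \<pi> J(2)] by simp
    then show ?thesis by blast
  qed
  with J hom_in_carrier[OF \<pi>] show ?thesis by (auto simp: lin_spans_def)
qed

lemma hom_FactGroup_the_elem:
  fixes K :: "('c, 'd) monoid_scheme"
  assumes H: "subgroup H G" and K: "group K" and \<phi>: "\<phi> \<in> hom G K" "\<forall>h\<in>H. \<phi> h = \<one>\<^bsub>K\<^esub>"
  shows "\<And>x. x \<in> carrier G \<Longrightarrow> the_elem (\<phi> ` (H #> x)) = \<phi> x"
    and "(\<lambda>U. the_elem (\<phi> ` U)) \<in> hom (G Mod H) K"
proof -
  have \<phi>_coset: "\<phi> ` (H #> x) = {\<phi> x}" if x: "x \<in> carrier G" for x
  proof -
    have "\<phi> (h \<otimes> x) = \<phi> x" if "h \<in> H" for h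
      using that x \<phi> hom_in_carrier[OF \<phi>(1) x] H K
      by (simp add: hom_mult subgroup.mem_carrier monoid.l_one group.is_monoid)
    moreover have "\<one> \<in> H" by (rule subgroup.one_closed[OF H])
    ultimately show ?thesis unfolding r_coset_def using x by force
  qed
  then show the_elem: "the_elem (\<phi> ` (H #> x)) = \<phi> x" if "x \<in> carrier G" for x
    using that by simp
  have \<pi>: "(\<lambda>x. H #> x) \<in> hom G (G Mod H)" by (rule r_coset_hom_FactGroup[OF H])
  show "(\<lambda>U. the_elem (\<phi> ` U)) \<in> hom (G Mod H) K"
  proof (rule homI)
    fix U assume "U \<in> carrier (G Mod H)"
    then show "the_elem (\<phi> ` U) \<in> carrier K"
      using the_elem hom_in_carrier[OF \<phi>(1)] by (auto simp: carrier_FactGroup)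
  next
    fix U V assume "U \<in> carrier (G Mod H)" "V \<in> carrier (G Mod H)"
    then obtain x y where xy: "x \<in> carrier G" "y \<in> carrier G" "U = H #> x" "V = H #> y"
      by (auto simp: carrier_FactGroup)
    then have "U \<otimes>\<^bsub>G Mod H\<^esub> V = H #> (x \<otimes> y)" using \<pi> by (simp add: hom_mult)
    with xy show "the_elem (\<phi> ` (U \<otimes>\<^bsub>G Mod H\<^esub> V)) = the_elem (\<phi> ` U) \<otimes>\<^bsub>K\<^esub> the_elem (\<phi> ` V)"
      using \<phi>(1) by (simp add: the_elem hom_mult)
  qed
qed

lemma card_Hom_FactGroup:
  fixes K :: "('c, 'd) monoid_scheme"
  assumes H: "subgroup H G" and K: "group K"
  shows "card {\<phi> \<in> Hom G K. \<forall>h\<in>H. \<phi> h = \<one>\<^bsub>K\<^esub>} = card (Hom (G Mod H) K)"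
proof -
  interpret Q: comm_group "G Mod H" by (rule abelian_FactGroup[OF H])
  have \<pi>: "(\<lambda>x. H #> x) \<in> hom G (G Mod H)" by (rule r_coset_hom_FactGroup[OF H])
  define \<Psi> where "\<Psi> \<psi> = restrict (\<lambda>x. \<psi> (H #> x)) (carrier G)" for \<psi> :: "'a set \<Rightarrow> 'c"
  have "bij_betw \<Psi> (Hom (G Mod H) K) {\<phi> \<in> Hom G K. \<forall>h\<in>H. \<phi> h = \<one>\<^bsub>K\<^esub>}"
  proof (rule bij_betwI')
    fix \<psi> \<psi>' assume "\<psi> \<in> Hom (G Mod H) K" "\<psi>' \<in> Hom (G Mod H) K"
    then show "(\<Psi> \<psi> = \<Psi> \<psi>') = (\<psi> = \<psi>')"
      by (auto simp: \<Psi>_def Hom_def carrier_FactGroup restrict_def fun_eq_iff extensional_def)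
        (metis image_iff)
  next
    fix \<psi> assume "\<psi> \<in> Hom (G Mod H) K"
    then have \<psi>: "\<psi> \<in> hom (G Mod H) K" by (simp add: Hom_def)
    have "\<Psi> \<psi> \<in> hom G K"
      using hom_compose[OF \<pi> \<psi>] by (simp add: \<Psi>_def compose_def)
    moreover have "\<Psi> \<psi> h = \<one>\<^bsub>K\<^esub>" if "h \<in> H" for h
      using that H hom_one[OF \<psi> Q.is_group K]
      by (simp add: \<Psi>_def coset_join2 subgroup.mem_carrier)
    ultimately show "\<Psi> \<psi> \<in> {\<phi> \<in> Hom G K. \<forall>h\<in>H. \<phi> h = \<one>\<^bsub>K\<^esub>}"
      by (simp add: Hom_def \<Psi>_def)
  next
    fix \<phi> assume "\<phi> \<in> {\<phi> \<in> Hom G K. \<forall>h\<in>H. \<phi> h = \<one>\<^bsub>K\<^esub>}"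
    then have \<phi>: "\<phi> \<in> hom G K" "\<phi> \<in> extensional (carrier G)" "\<forall>h\<in>H. \<phi> h = \<one>\<^bsub>K\<^esub>"
      by (auto simp: Hom_def)
    define \<psi> where "\<psi> = restrict (\<lambda>U. the_elem (\<phi> ` U)) (carrier (G Mod H))"
    have "\<psi> \<in> Hom (G Mod H) K"
      using hom_FactGroup_the_elem(2)[OF H K \<phi>(1,3)] unfolding \<psi>_def Hom_def
      by (auto intro: Q.hom_restrict)
    moreover have "\<phi> = \<Psi> \<psi>"
      using \<phi>(2) hom_FactGroup_the_elem(1)[OF H K \<phi>(1,3)]
      by (auto simp: \<Psi>_def \<psi>_def fun_eq_iff extensional_def carrier_FactGroup)
    ultimately show "\<exists>\<psi>\<in>Hom (G Mod H) K. \<phi> = \<Psi> \<psi>" by blast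
  qed
  then show ?thesis by (simp add: bij_betw_same_card)
qed

lemma lin_indep_lift_append:
  fixes a q :: nat
  assumes H: "subgroup H G" and f: "f ` {..<a} \<subseteq> H" "lin_indep G f {..<a}"
    and y: "y ` {..<q} \<subseteq> carrier G" "lin_indep (G Mod H) (\<lambda>j. H #> y j) {..<q}"
  shows "lin_indep G (\<lambda>i. if i < a then f i else y (i - a)) {..<a + q}"
  unfolding lin_indep_def
proof (intro allI impI ballI)
  fix c i
  assume c: "lin_comb G (\<lambda>i. if i < a then f i else y (i - a)) c {..<a + q} = \<one>"
    and i: "i \<in> {..<a + q}"
  interpret Q: comm_group "G Mod H" by (rule abelian_FactGroup[OF H])
  have \<pi>: "(\<lambda>x. H #> x) \<in> hom G (G Mod H)" by (rule r_coset_hom_FactGroup[OF H])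
  have fc: "f ` {..<a} \<subseteq> carrier G" using f(1) subgroup.subset[OF H] by blast
  let ?Lf = "lin_comb G f c {..<a}" and ?Ly = "lin_comb G y (\<lambda>j. c (a + j)) {..<q}"
  have split: "?Lf \<otimes> ?Ly = \<one>" using c lin_comb_append[OF fc y(1)] by simp
  have Lf: "?Lf \<in> H" by (rule lin_comb_in_subgroup[OF H f(1)])
  have Lyq: "lin_comb (G Mod H) (\<lambda>j. H #> y j) (\<lambda>j. c (a + j)) {..<q} \<in> carrier (G Mod H)"
    using y(1) hom_in_carrier[OF \<pi>] by (intro Q.lin_comb_closed) auto
  have "\<one>\<^bsub>G Mod H\<^esub> = H #> (?Lf \<otimes> ?Ly)"
    using split H by (simp add: coset_mult_one subgroup.subset)
  also have "\<dots> = (H #> ?Lf) \<otimes>\<^bsub>G Mod H\<^esub> (H #> ?Ly)" using \<pi> fc y(1) by (simp add: hom_mult)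
  also have "H #> ?Lf = \<one>\<^bsub>G Mod H\<^esub>" using Lf H fc by (simp add: coset_join2)
  also have "H #> ?Ly = lin_comb (G Mod H) (\<lambda>j. H #> y j) (\<lambda>j. c (a + j)) {..<q}"
    by (rule lin_comb_hom[OF Q.comm_group_axioms \<pi> y(1)])
  finally have "lin_comb (G Mod H) (\<lambda>j. H #> y j) (\<lambda>j. c (a + j)) {..<q} = \<one>\<^bsub>G Mod H\<^esub>"
    using Lyq by (metis Q.l_one)
  then have "\<forall>j\<in>{..<q}. c (a + j) = 0" using y(2) unfolding lin_indep_def by blast
  then have "\<forall>j<q. c (a + j) = 0" by simp
  then have "?Ly = lin_comb G y (\<lambda>_. 0) {..<q}" using y(1) by (intro lin_comb_coeff_cong) auto
  then have "?Ly = \<one>" by simp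
  with split fc have "?Lf = \<one>" by simp
  with f(2) have "\<forall>j<a. c j = 0" unfolding lin_indep_def by blast
  show "c i = 0"
  proof (cases "i < a")
    case False
    with i have "i - a < q" by auto
    with \<open>\<forall>j<q. c (a + j) = 0\<close> False show ?thesis by (metis le_add_diff_inverse not_less)
  qed (use \<open>\<forall>j<a. c j = 0\<close> in auto)
qed

lemma power_span_lift_append:
  fixes a q :: nat
  assumes H: "subgroup H G" and f: "f ` {..<a} \<subseteq> carrier G" and y: "y ` {..<q} \<subseteq> carrier G"
    and span_H: "\<And>h. h \<in> H \<Longrightarrow> \<exists>m c. m \<noteq> 0 \<and> h [^] (m::int) = lin_comb G f c {..<a}"
    and span_Q: "\<And>U. U \<in> carrier (G Mod H) \<Longrightarrow>
      \<exists>m c. m \<noteq> 0 \<and> U [^]\<^bsub>G Mod H\<^esub> (m::int) = lin_comb (G Mod H) (\<lambda>j. H #> y j) c {..<q}"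
    and x: "x \<in> carrier G"
  shows "\<exists>m c. m \<noteq> 0 \<and> x [^] (m::int) = lin_comb G (\<lambda>i. if i < a then f i else y (i - a)) c {..<a + q}"
proof -
  interpret Q: comm_group "G Mod H" by (rule abelian_FactGroup[OF H])
  have \<pi>: "(\<lambda>x. H #> x) \<in> hom G (G Mod H)" by (rule r_coset_hom_FactGroup[OF H])
  interpret \<pi>: group_hom G "G Mod H" "\<lambda>x. H #> x"
    using \<pi> by (simp add: group_hom_def group_hom_axioms_def is_group Q.is_group)
  have "H #> x \<in> carrier (G Mod H)" using x by (simp add: carrier_FactGroup)
  then obtain m1 d where m1: "m1 \<noteq> 0"
    "(H #> x) [^]\<^bsub>G Mod H\<^esub> (m1::int) = lin_comb (G Mod H) (\<lambda>j. H #> y j) d {..<q}"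
    using span_Q by blast
  define Ly where "Ly = lin_comb G y d {..<q}"
  have Ly: "Ly \<in> carrier G" using y by (simp add: Ly_def)
  define u where "u = x [^] m1 \<otimes> inv Ly"
  have u: "u \<in> carrier G" using x Ly by (simp add: u_def)
  have Lyq: "lin_comb (G Mod H) (\<lambda>j. H #> y j) d {..<q} \<in> carrier (G Mod H)"
    using y hom_in_carrier[OF \<pi>] by (intro Q.lin_comb_closed) auto
  have "H #> u = (H #> x) [^]\<^bsub>G Mod H\<^esub> m1 \<otimes>\<^bsub>G Mod H\<^esub> inv\<^bsub>G Mod H\<^esub> (H #> Ly)"
    using x Ly by (simp add: u_def \<pi>.hom_int_pow)
  also have "H #> Ly = lin_comb (G Mod H) (\<lambda>j. H #> y j) d {..<q}"
    unfolding Ly_def by (rule lin_comb_hom[OF Q.comm_group_axioms \<pi> y])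
  finally have "H #> u = \<one>\<^bsub>G Mod H\<^esub>"
    using m1(2) Lyq by (metis Q.r_inv)
  then have "u \<in> H" using H u by (simp add: r_coset_eq_one_iff)
  then obtain m2 e where m2: "m2 \<noteq> 0" "u [^] (m2::int) = lin_comb G f e {..<a}"
    using span_H by blast
  have "x [^] (m1 * m2) = (u \<otimes> Ly) [^] m2"
    using x Ly by (simp add: u_def m_assoc int_pow_pow)
  also have "\<dots> = lin_comb G f e {..<a} \<otimes> lin_comb G y (\<lambda>j. m2 * d j) {..<q}"
    using u Ly m2(2) y by (simp add: int_pow_distrib Ly_def lin_comb_int_pow)
  also have "\<dots> = lin_comb G (\<lambda>i. if i < a then f i else y (i - a))
      (\<lambda>i. if i < a then e i else m2 * d (i - a)) {..<a + q}" (is "_ = lin_comb G _ ?c _")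
  proof -
    have "lin_comb G f e {..<a} = lin_comb G f ?c {..<a}" using f by (intro lin_comb_coeff_cong) auto
    then show ?thesis using lin_comb_append[OF f y, of ?c] by simp
  qed
  finally show ?thesis using m1(1) m2(1) by (intro exI[of _ "m1 * m2"]) auto
qed

theorem grp_rank_FactGroup:
  assumes w: "lin_spans G w J" and H: "subgroup H G"
  shows "grp_rank (G Mod H) (carrier (G Mod H)) = grp_rank G (carrier G) - grp_rank G H"
proof -
  interpret Q: comm_group "G Mod H" by (rule abelian_FactGroup[OF H])
  have HG: "H \<subseteq> carrier G" by (rule subgroup.subset[OF H])
  have wQ: "lin_spans (G Mod H) (\<lambda>j. H #> w j) J" by (rule lin_spans_FactGroup[OF w H])
  let ?a = "grp_rank G H" and ?q = "grp_rank (G Mod H) (carrier (G Mod H))"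
  obtain f where f: "\<forall>i<?a. f i \<in> H" "int_indep G ?a f" using grp_rank_witness[OF w HG] .
  obtain g where g: "\<forall>i<?q. g i \<in> carrier (G Mod H)" "int_indep (G Mod H) ?q g"
    using Q.grp_rank_witness[OF wQ subset_refl] .
  have "\<forall>j<?q. \<exists>x. x \<in> carrier G \<and> g j = H #> x" using g(1) by (auto simp: carrier_FactGroup)
  then obtain y where y: "\<And>j. j < ?q \<Longrightarrow> y j \<in> carrier G \<and> g j = H #> y j" by metis
  have fc: "f ` {..<?a} \<subseteq> carrier G" and yc: "y ` {..<?q} \<subseteq> carrier G" using f HG y by auto
  have lifts: "lin_comb (G Mod H) (\<lambda>j. H #> y j) c {..<?q} = lin_comb (G Mod H) g c {..<?q}" for c
    using g(1) y by (intro Q.lin_comb_cong) auto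
  have "lin_indep (G Mod H) (\<lambda>j. H #> y j) {..<?q}"
    using g(2) lifts unfolding int_indep_iff_lin_indep lin_indep_def by simp
  with f have z_indep: "lin_indep G (\<lambda>i. if i < ?a then f i else y (i - ?a)) {..<?a + ?q}"
    by (intro lin_indep_lift_append[OF H _ _ yc]) (auto simp: int_indep_iff_lin_indep)
  then have "card {..<?a + ?q} \<le> grp_rank G (carrier G)"
    using fc yc by (intro card_le_grp_rank[OF w subset_refl finite_lessThan _ z_indep])
      (auto simp: image_subset_iff)
  moreover have "grp_rank G (carrier G) \<le> card {..<?a + ?q}"
  proof (rule grp_rank_le_card[OF w subset_refl])
    fix x assume "x \<in> carrier G"
    then show "\<exists>m c. m \<noteq> 0 \<and> x [^] (m::int) = lin_comb G (\<lambda>i. if i < ?a then f i else y (i - ?a)) c {..<?a + ?q}"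
      using grp_rank_maximal[OF w HG f] Q.grp_rank_maximal[OF wQ subset_refl g] lifts
      by (intro power_span_lift_append[OF H fc yc]) auto
  qed (use fc yc in \<open>auto simp: image_subset_iff\<close>)
  ultimately show ?thesis by simp
qed

end

lemma int_card_avoiding:
  fixes P :: "'i \<Rightarrow> 'x \<Rightarrow> bool"
  assumes "finite A" "finite I"
  shows "int (card {x \<in> A. \<forall>i\<in>I. \<not> P i x})
    = (\<Sum>J\<in>Pow I. (-1) ^ card J * int (card {x \<in> A. \<forall>i\<in>J. P i x}))"
proof -
  define f where "f S = int (card (A \<inter> S))" for S
  have meet: "{x \<in> A. \<forall>i\<in>J. P i x} = A \<inter> \<Inter> ((\<lambda>i. {x. P i x}) ` J)" for J by auto
  have "f (S \<union> T) = f S + f T" if "disjnt S T" for S T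
  proof -
    have "card (A \<inter> (S \<union> T)) = card (A \<inter> S) + card (A \<inter> T)"
      unfolding Int_Un_distrib using that assms(1)
      by (intro card_Un_disjoint) (auto simp: disjnt_def)
    then show ?thesis by (simp add: f_def)
  qed
  then have union: "f (\<Union> ((\<lambda>i. {x. P i x}) ` I))
      = (\<Sum>J | J \<subseteq> I \<and> J \<noteq> {}. (-1) ^ (card J + 1) * f (\<Inter> ((\<lambda>i. {x. P i x}) ` J)))"
    using assms(2) by (rule Incl_Excl_UN)
  have "{x \<in> A. \<forall>i\<in>I. \<not> P i x} = A - A \<inter> \<Union> ((\<lambda>i. {x. P i x}) ` I)" by auto
  then have "int (card {x \<in> A. \<forall>i\<in>I. \<not> P i x}) = int (card A) - f (\<Union> ((\<lambda>i. {x. P i x}) ` I))"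
    using assms(1) by (simp add: f_def card_Diff_subset_Int of_nat_diff card_mono)
  also have "\<dots> = (\<Sum>J\<in>insert {} {J. J \<subseteq> I \<and> J \<noteq> {}}. (-1) ^ card J * f (\<Inter> ((\<lambda>i. {x. P i x}) ` J)))"
  proof -
    have "finite {J. J \<subseteq> I \<and> J \<noteq> {}}" using assms(2) by simp
    moreover have "- f (\<Union> ((\<lambda>i. {x. P i x}) ` I))
        = (\<Sum>J | J \<subseteq> I \<and> J \<noteq> {}. (-1) ^ card J * f (\<Inter> ((\<lambda>i. {x. P i x}) ` J)))"
      unfolding union by (simp add: sum_negf[symmetric])
    ultimately show ?thesis by (simp add: f_def)
  qed
  also have "insert {} {J. J \<subseteq> I \<and> J \<noteq> {}} = Pow I" by auto
  finally show ?thesis by (simp add: meet f_def)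
qed

context comm_group
begin

lemma finite_Hom:
  fixes K :: "('c, 'd) monoid_scheme"
  assumes w: "lin_spans G w J" and K: "comm_group K" "finite (carrier K)"
  shows "finite (Hom G K)"
proof -
  interpret K: comm_group K by fact
  have J: "finite J" "w ` J \<subseteq> carrier G" using w by (auto simp: lin_spans_def)
  have "inj_on (\<lambda>\<phi>. restrict (\<phi> \<circ> w) J) (Hom G K)"
  proof (rule inj_onI)
    fix \<phi> \<phi>' assume \<phi>: "\<phi> \<in> Hom G K" "\<phi>' \<in> Hom G K"
      and eq: "restrict (\<phi> \<circ> w) J = restrict (\<phi>' \<circ> w) J"
    have "\<phi> x = \<phi>' x" if x: "x \<in> carrier G" for x
    proof -
      obtain c where c: "x = lin_comb G w c J" using w x by (auto simp: lin_spans_def)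
      have "\<phi> (w j) = \<phi>' (w j)" if "j \<in> J" for j
        using eq that by (metis comp_apply restrict_apply')
      then have "lin_comb K (\<lambda>j. \<phi> (w j)) c J = lin_comb K (\<lambda>j. \<phi>' (w j)) c J"
        using J(2) \<phi> by (intro K.lin_comb_cong) (auto simp: Hom_def image_subset_iff intro: hom_in_carrier)
      then show ?thesis
        using c \<phi> J(2) by (simp add: Hom_def lin_comb_hom[OF K(1)])
    qed
    with \<phi> show "\<phi> = \<phi>'" by (auto simp: Hom_def intro: extensionalityI)
  qed
  moreover have "(\<lambda>\<phi>. restrict (\<phi> \<circ> w) J) ` Hom G K \<subseteq> (\<Pi>\<^sub>E j\<in>J. carrier K)"
    using J(2) by (auto simp: Hom_def image_subset_iff hom_in_carrier)
  moreover have "finite (\<Pi>\<^sub>E j\<in>J. carrier K)" using J(1) K(2) by (rule finite_PiE)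
  ultimately show ?thesis by (rule inj_on_finite)
qed

lemma card_Hom_killing:
  fixes K :: "('c, 'd) monoid_scheme"
  assumes w: "lin_spans G w J" and K: "comm_group K" and S: "S \<subseteq> carrier G"
  defines "Q \<equiv> G Mod generate G S"
  shows "card {\<phi> \<in> Hom G K. \<forall>s\<in>S. \<phi> s = \<one>\<^bsub>K\<^esub>}
    = card (Hom (Q\<lparr>carrier := torsion_subgroup Q\<rparr>) K)
      * card (carrier K) ^ (grp_rank G (carrier G) - grp_rank G (generate G S))"
proof -
  interpret K: comm_group K by fact
  have H: "subgroup (generate G S) G" by (rule generate_is_subgroup[OF S])
  have "\<forall>h\<in>generate G S. \<phi> h = \<one>\<^bsub>K\<^esub>" if "\<phi> \<in> hom G K" "\<forall>s\<in>S. \<phi> s = \<one>\<^bsub>K\<^esub>" for \<phi>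
  proof -
    interpret group_hom G K \<phi> using that(1) by unfold_locales
    have "S \<subseteq> kernel G K \<phi>" using S that(2) by (auto simp: kernel_def)
    then show ?thesis using generate_subgroup_incl[OF _ subgroup_kernel] by (auto simp: kernel_def)
  qed
  then have "{\<phi> \<in> Hom G K. \<forall>s\<in>S. \<phi> s = \<one>\<^bsub>K\<^esub>} = {\<phi> \<in> Hom G K. \<forall>h\<in>generate G S. \<phi> h = \<one>\<^bsub>K\<^esub>}"
    using generate.incl[of _ S G] by (auto simp: Hom_def)
  also have "card \<dots> = card (Hom Q K)" unfolding Q_def by (rule card_Hom_FactGroup[OF H K.is_group])
  also have "\<dots> = card (Hom (Q\<lparr>carrier := torsion_subgroup Q\<rparr>) K) * card (carrier K) ^ grp_rank Q (carrier Q)"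
    unfolding Q_def
    by (rule comm_group.card_Hom_fin_gen[OF abelian_FactGroup[OF H] lin_spans_FactGroup[OF w H] K])
  also have "grp_rank Q (carrier Q) = grp_rank G (carrier G) - grp_rank G (generate G S)"
    unfolding Q_def by (rule grp_rank_FactGroup[OF w H])
  finally show ?thesis .
qed

end

theorem mainTheorem10:
  fixes \<Gamma> :: "('a, 'b) monoid_scheme" and G :: "('c, 'd) monoid_scheme" and \<A> :: "'a list"
  assumes "comm_group \<Gamma>" and "fin_gen \<Gamma>" and "set \<A> \<subseteq> carrier \<Gamma>"
    and "comm_group G" and "finite (carrier G)"
  shows "int (card (M_set \<A> \<Gamma> G)) = poly (char_poly \<A> \<Gamma> G) (int (card (carrier G)))"
proof -
  interpret \<Gamma>: comm_group \<Gamma> by fact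
  obtain J where J: "lin_spans \<Gamma> id J" using \<Gamma>.fin_gen_imp_lin_spans[OF assms(2)] .
  let ?n = "length \<A>" and ?killing = "\<lambda>I. {\<phi> \<in> Hom \<Gamma> G. \<forall>i\<in>I. \<phi> (\<A> ! i) = \<one>\<^bsub>G\<^esub>}"
  have "M_set \<A> \<Gamma> G = {\<phi> \<in> Hom \<Gamma> G. \<forall>i\<in>{..<?n}. \<not> \<phi> (\<A> ! i) = \<one>\<^bsub>G\<^esub>}"
    by (auto simp: M_set_def all_set_conv_all_nth)
  then have "int (card (M_set \<A> \<Gamma> G)) = (\<Sum>I\<in>Pow {..<?n}. (-1) ^ card I * int (card (?killing I)))"
    using int_card_avoiding[of "Hom \<Gamma> G" "{..<?n}" "\<lambda>i \<phi>. \<phi> (\<A> ! i) = \<one>\<^bsub>G\<^esub>"]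
      \<Gamma>.finite_Hom[OF J assms(4,5)] by simp
  also have "\<dots> = (\<Sum>I\<in>Pow {..<?n}. (-1) ^ card I * (int (m_count \<A> \<Gamma> G I)
      * int (card (carrier G)) ^ (grp_rank \<Gamma> (carrier \<Gamma>) - grp_rank \<Gamma> (sub_span \<A> \<Gamma> I))))"
  proof (rule sum.cong[OF refl])
    fix I assume "I \<in> Pow {..<?n}"
    then have "(\<lambda>i. \<A> ! i) ` I \<subseteq> carrier \<Gamma>" using assms(3) nth_mem by fastforce
    from \<Gamma>.card_Hom_killing[OF J assms(4) this] show "(-1) ^ card I * int (card (?killing I))
      = (-1) ^ card I * (int (m_count \<A> \<Gamma> G I)
        * int (card (carrier G)) ^ (grp_rank \<Gamma> (carrier \<Gamma>) - grp_rank \<Gamma> (sub_span \<A> \<Gamma> I)))"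
      by (simp add: m_count_def sub_span_def Let_def)
  qed
  also have "\<dots> = poly (char_poly \<A> \<Gamma> G) (int (card (carrier G)))"
    by (simp add: char_poly_def poly_sum poly_monom mult.assoc)
  finally show ?thesis .
qed

end
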